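(* Let $d\geq1$ and fix a width $p\geq d+3$. For each $k\in\{1,\ldots,p\}$ let $\{B_{kr}:r\geq1\}$ be a set of basis functions. Let $\sigma:\mathbb{R}\to[0,1]$ be a continuous function which is continuously differentiable at at least one point, with nonzero derivative at that point. For $L\geq1$, vectors $W_k^{(1)}\in\mathbb{R}^d$ and $W_k^{(l)}\in\mathbb{R}^p$ ($2\le l\le L$), integers $q_k\geq1$ and real numbers $c_{kr},b_k^{(l)},b$, define the HDANN2 function on $[0,1]^d$ by $$x_k^{(1)}=\sigma\big({W_k^{(1)}}^\top\mathbf{x}+b_k^{(1)}\big),\qquad x_k^{(l)}=\sigma\big({W_k^{(l)}}^\top\mathbf{x}^{(l-1)}+b_k^{(l)}\big)\ (2\le l\le L),\quad k=1,\ldots,p,$$ where $\mathbf{x}^{(l)}=(x_1^{(l)},\ldots,x_p^{(l)})^\top$, and output $\mathrm{HDANN2}(\mathbf{x})=\sum_{k=1}^p\sum_{r=1}^{q_k}c_{kr}B_{kr}(x_k^{(L)})+b$. Then for any continuous $f:[0,1]^d\to\mathbb{R}$ and any $\epsilon>0$ there exist $L\geq1$, $q_k\geq1$, $W_k^{(l)}$ and $c_{kr},b_k^{(l)},b\in\mathbb{R}$ such that $$\sup_{\mathbf{x}\in[0,1]^d}|f(\mathbf{x})-\mathrm{HDANN2}(\mathbf{x})|<\epsilon.$$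
   Context: A set $\{B_r:[0,1]\to\mathbb{R}\,|\,r\geq1\}$ of functions is called a set of basis functions if for every continuous $\phi:[0,1]\to\mathbb{R}$ and every $\epsilon>0$ there exist $q\geq1$ and $c_1,\ldots,c_q,c\in\mathbb{R}$ with $\sup_{x\in[0,1]}|\phi(x)-(\sum_{r=1}^q c_rB_r(x)+c)|<\epsilon$. *)

theory Defs
  imports "HOL-Analysis.Analysis"
begin

text \<open>A family B r (r \<ge> 1) of functions [0,1] -> R is a set of basis functions.
  The sup-norm bound "sup < eps" is expressed as: some delta < eps bounds the error uniformly.\<close>
definition basis_functions :: "(nat \<Rightarrow> real \<Rightarrow> real) \<Rightarrow> bool" where
  "basis_functions B \<longleftrightarrow>
     (\<forall>\<phi>. continuous_on {0..1} \<phi> \<longrightarrow>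
        (\<forall>\<epsilon>>0. \<exists>q\<ge>1. \<exists>(c::nat \<Rightarrow> real) (c0::real). \<exists>\<delta><\<epsilon>.
           \<forall>x\<in>{0..1::real}. \<bar>\<phi> x - ((\<Sum>r=1..q. c r * B r x) + c0)\<bar> \<le> \<delta>))"

text \<open>Hidden layers. Vectors are functions nat => real, indexed 1..d (input) and 1..p (hidden).
  W l k i is the i-th entry of W_k^(l); bb l k = b_k^(l). Layer 0 is the input.\<close>
primrec hdann_layer ::
  "(real \<Rightarrow> real) \<Rightarrow> nat \<Rightarrow> nat \<Rightarrow> (nat \<Rightarrow> nat \<Rightarrow> nat \<Rightarrow> real) \<Rightarrow> (nat \<Rightarrow> nat \<Rightarrow> real)
   \<Rightarrow> nat \<Rightarrow> (nat \<Rightarrow> real) \<Rightarrow> (nat \<Rightarrow> real)" where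
  "hdann_layer \<sigma> d p W bb 0 x = x"
| "hdann_layer \<sigma> d p W bb (Suc l) x =
     (\<lambda>k. \<sigma> ((\<Sum>j=1..(if l = 0 then d else p). W (Suc l) k j * hdann_layer \<sigma> d p W bb l x j)
              + bb (Suc l) k))"

definition hdann2 ::
  "(real \<Rightarrow> real) \<Rightarrow> nat \<Rightarrow> nat \<Rightarrow> (nat \<Rightarrow> nat \<Rightarrow> real \<Rightarrow> real) \<Rightarrow> nat
   \<Rightarrow> (nat \<Rightarrow> nat \<Rightarrow> nat \<Rightarrow> real) \<Rightarrow> (nat \<Rightarrow> nat \<Rightarrow> real) \<Rightarrow> (nat \<Rightarrow> nat)
   \<Rightarrow> (nat \<Rightarrow> nat \<Rightarrow> real) \<Rightarrow> real \<Rightarrow> (nat \<Rightarrow> real) \<Rightarrow> real" where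
  "hdann2 \<sigma> d p B L W bb q c b x =
     (\<Sum>k=1..p. \<Sum>r=1..q k. c k r * B k r (hdann_layer \<sigma> d p W bb L x k)) + b"

definition unit_cube :: "nat \<Rightarrow> (nat \<Rightarrow> real) set" where
  "unit_cube d = {x. (\<forall>i\<in>{1..d}. 0 \<le> x i \<and> x i \<le> 1) \<and> (\<forall>i. i \<notin> {1..d} \<longrightarrow> x i = 0)}"

end

(*
  Shallow networks c + sum_i a_i sigma(<v_i, x> + b_i) are uniformly dense in C([0,1]^d)
  for every bounded, continuous, nonconstant sigma. Iterated Steklov means of sigma are
  smooth, are themselves limits of shallow networks, and have a forward difference of
  sigma as their highest derivative, which cannot vanish identically; a scaled Taylor
  expansion then yields every power t^k, hence all ridge polynomials, then all products
  of linear forms via difference quotients, and by Stone-Weierstrass all continuous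
  functions.

  A deep network of width d + 3 emulates any shallow one. Near a point t0 with
  sigma'(t0) <> 0 we have sigma(t0 + h u) ~ sigma(t0) + h sigma'(t0) u, so for small h the
  first d channels pass the input through every layer almost unchanged, channel d + 2
  evaluates one hidden unit per layer, and channel d + 1 accumulates their weighted sum;
  all errors vanish uniformly as h -> 0. The output layer applies the basis functions to
  the accumulator channel to undo its affine encoding.
*)

theory Submission
  imports Defs
begin

section \<open>Shallow networks in one variable\<close>

definition shallow_net1 :: "(real \<Rightarrow> real) \<Rightarrow> (real \<times> real \<times> real) list \<Rightarrow> real \<Rightarrow> real" where
  "shallow_net1 \<sigma> xs t = (\<Sum>(a, w, b)\<leftarrow>xs. a * \<sigma> (w * t + b))"

definition shallow1_approximable :: "(real \<Rightarrow> real) \<Rightarrow> (real \<Rightarrow> real) \<Rightarrow> bool" where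
  "shallow1_approximable \<sigma> \<phi> \<longleftrightarrow>
     (\<forall>R>0. \<forall>\<epsilon>>0. \<exists>c xs. \<forall>t. \<bar>t\<bar> \<le> R \<longrightarrow> \<bar>\<phi> t - (c + shallow_net1 \<sigma> xs t)\<bar> \<le> \<epsilon>)"

lemma shallow_net1_append: "shallow_net1 \<sigma> (xs @ ys) t = shallow_net1 \<sigma> xs t + shallow_net1 \<sigma> ys t"
  by (simp add: shallow_net1_def)

lemma shallow_net1_scale:
  "shallow_net1 \<sigma> (map (\<lambda>(a, w, b). (k * a, w, b)) xs) t = k * shallow_net1 \<sigma> xs t"
  by (induction xs) (auto simp: shallow_net1_def algebra_simps)

lemma shallow_net1_affine:
  "shallow_net1 \<sigma> (map (\<lambda>(a, w, b). (a, w * \<alpha>, w * \<beta> + b)) xs) t = shallow_net1 \<sigma> xs (\<alpha> * t + \<beta>)"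
  by (induction xs) (auto simp: shallow_net1_def algebra_simps)

lemma shallow1_approximable_const: "shallow1_approximable \<sigma> (\<lambda>t. c)"
  unfolding shallow1_approximable_def
  by (intro allI impI exI[of _ c] exI[of _ "[]"]) (simp add: shallow_net1_def)

lemma shallow1_approximable_activation: "shallow1_approximable \<sigma> \<sigma>"
  unfolding shallow1_approximable_def
  by (intro allI impI exI[of _ 0] exI[of _ "[(1, 1, 0)]"]) (simp add: shallow_net1_def)

lemma shallow1_approximable_add:
  assumes "shallow1_approximable \<sigma> f" "shallow1_approximable \<sigma> g"
  shows "shallow1_approximable \<sigma> (\<lambda>t. f t + g t)"
  unfolding shallow1_approximable_def
proof (intro allI impI)
  fix R \<epsilon> :: real assume "R > 0" "\<epsilon> > 0"
  then obtain c1 xs1 c2 xs2 where f: "\<forall>t. \<bar>t\<bar> \<le> R \<longrightarrow> \<bar>f t - (c1 + shallow_net1 \<sigma> xs1 t)\<bar> \<le> \<epsilon>/2"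
    and g: "\<forall>t. \<bar>t\<bar> \<le> R \<longrightarrow> \<bar>g t - (c2 + shallow_net1 \<sigma> xs2 t)\<bar> \<le> \<epsilon>/2"
    using assms half_gt_zero unfolding shallow1_approximable_def by metis
  have "\<bar>f t + g t - (c1 + c2 + shallow_net1 \<sigma> (xs1 @ xs2) t)\<bar> \<le> \<epsilon>" if "\<bar>t\<bar> \<le> R" for t
    using f[rule_format, OF that] g[rule_format, OF that] unfolding shallow_net1_append by linarith
  then show "\<exists>c xs. \<forall>t. \<bar>t\<bar> \<le> R \<longrightarrow> \<bar>f t + g t - (c + shallow_net1 \<sigma> xs t)\<bar> \<le> \<epsilon>"
    by blast
qed

lemma shallow1_approximable_cmult:
  assumes "shallow1_approximable \<sigma> f"
  shows "shallow1_approximable \<sigma> (\<lambda>t. k * f t)"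
  unfolding shallow1_approximable_def
proof (intro allI impI)
  fix R \<epsilon> :: real assume "R > 0" "\<epsilon> > 0"
  then obtain c xs where approx: "\<forall>t. \<bar>t\<bar> \<le> R \<longrightarrow> \<bar>f t - (c + shallow_net1 \<sigma> xs t)\<bar> \<le> \<epsilon> / (\<bar>k\<bar> + 1)"
    using assms unfolding shallow1_approximable_def
    by (metis divide_pos_pos abs_ge_zero add_nonneg_pos zero_less_one)
  have "\<bar>k * f t - (k * c + shallow_net1 \<sigma> (map (\<lambda>(a, w, b). (k * a, w, b)) xs) t)\<bar> \<le> \<epsilon>"
    if "\<bar>t\<bar> \<le> R" for t
  proof -
    have "\<bar>k * f t - (k * c + shallow_net1 \<sigma> (map (\<lambda>(a, w, b). (k * a, w, b)) xs) t)\<bar>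
        = \<bar>k\<bar> * \<bar>f t - (c + shallow_net1 \<sigma> xs t)\<bar>"
      by (simp only: shallow_net1_scale) (simp add: abs_mult[symmetric] algebra_simps)
    also have "\<dots> \<le> (\<bar>k\<bar> + 1) * (\<epsilon> / (\<bar>k\<bar> + 1))"
      using approx that by (intro mult_mono) auto
    finally show ?thesis by simp
  qed
  then show "\<exists>c xs. \<forall>t. \<bar>t\<bar> \<le> R \<longrightarrow> \<bar>k * f t - (c + shallow_net1 \<sigma> xs t)\<bar> \<le> \<epsilon>"
    by blast
qed

lemma shallow1_approximable_affine:
  assumes "shallow1_approximable \<sigma> f"
  shows "shallow1_approximable \<sigma> (\<lambda>t. f (\<alpha> * t + \<beta>))"
  unfolding shallow1_approximable_def
proof (intro allI impI)
  fix R \<epsilon> :: real assume "R > 0" "\<epsilon> > 0"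
  moreover have "\<bar>\<alpha>\<bar> * R + \<bar>\<beta>\<bar> + 1 > 0"
    using \<open>R > 0\<close> by (simp add: add_nonneg_pos)
  ultimately obtain c xs where approx:
    "\<forall>t. \<bar>t\<bar> \<le> \<bar>\<alpha>\<bar> * R + \<bar>\<beta>\<bar> + 1 \<longrightarrow> \<bar>f t - (c + shallow_net1 \<sigma> xs t)\<bar> \<le> \<epsilon>"
    using assms unfolding shallow1_approximable_def by blast
  have "\<bar>\<alpha> * t + \<beta>\<bar> \<le> \<bar>\<alpha>\<bar> * R + \<bar>\<beta>\<bar> + 1" if "\<bar>t\<bar> \<le> R" for t
    using abs_triangle_ineq[of "\<alpha> * t" \<beta>] mult_left_mono[OF that, of "\<bar>\<alpha>\<bar>"]
    by (simp add: abs_mult)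
  with approx show "\<exists>c xs. \<forall>t. \<bar>t\<bar> \<le> R \<longrightarrow> \<bar>f (\<alpha> * t + \<beta>) - (c + shallow_net1 \<sigma> xs t)\<bar> \<le> \<epsilon>"
    by (intro exI[of _ c] exI[of _ "map (\<lambda>(a, w, b). (a, w * \<alpha>, w * \<beta> + b)) xs"])
      (simp add: shallow_net1_affine)
qed

lemma shallow1_approximable_limit:
  assumes "\<And>R \<epsilon>. R > 0 \<Longrightarrow> \<epsilon> > 0 \<Longrightarrow>
    \<exists>g. shallow1_approximable \<sigma> g \<and> (\<forall>t. \<bar>t\<bar> \<le> R \<longrightarrow> \<bar>f t - g t\<bar> \<le> \<epsilon>)"
  shows "shallow1_approximable \<sigma> f"
  unfolding shallow1_approximable_def
proof (intro allI impI)
  fix R \<epsilon> :: real assume R: "R > 0" and \<epsilon>: "\<epsilon> > 0"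
  obtain g where g: "shallow1_approximable \<sigma> g" "\<forall>t. \<bar>t\<bar> \<le> R \<longrightarrow> \<bar>f t - g t\<bar> \<le> \<epsilon>/2"
    using assms[OF R, of "\<epsilon>/2"] \<epsilon> by auto
  then obtain c xs where approx: "\<forall>t. \<bar>t\<bar> \<le> R \<longrightarrow> \<bar>g t - (c + shallow_net1 \<sigma> xs t)\<bar> \<le> \<epsilon>/2"
    using R \<epsilon> unfolding shallow1_approximable_def by (meson half_gt_zero)
  have "\<bar>f t - (c + shallow_net1 \<sigma> xs t)\<bar> \<le> \<epsilon>" if "\<bar>t\<bar> \<le> R" for t
    using g(2)[rule_format, OF that] approx[rule_format, OF that] by linarith
  then show "\<exists>c xs. \<forall>t. \<bar>t\<bar> \<le> R \<longrightarrow> \<bar>f t - (c + shallow_net1 \<sigma> xs t)\<bar> \<le> \<epsilon>"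
    by blast
qed

lemma shallow1_approximable_sum:
  assumes "\<And>i. i < (n::nat) \<Longrightarrow> shallow1_approximable \<sigma> (f i)"
  shows "shallow1_approximable \<sigma> (\<lambda>t. \<Sum>i<n. f i t)"
  using assms by (induction n) (simp_all add: shallow1_approximable_const shallow1_approximable_add)

lemma shallow1_approximable_diff:
  assumes "shallow1_approximable \<sigma> f" "shallow1_approximable \<sigma> g"
  shows "shallow1_approximable \<sigma> (\<lambda>t. f t - g t)"
  using shallow1_approximable_add[OF assms(1) shallow1_approximable_cmult[OF assms(2), of "-1"]] by simp

section \<open>Steklov means and forward differences\<close>

lemma continuous_has_antiderivative:
  fixes g :: "real \<Rightarrow> real"
  assumes g: "continuous_on UNIV g"
  obtains H where "\<And>t. (H has_real_derivative g t) (at t)"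
proof -
  \<comment> \<open>the signed integral from \<open>0\<close>: one of the two integrals is over an empty interval\<close>
  define H where "H x = integral {0..x} g - integral {x..0} g" for x
  have int: "g integrable_on {a..b}" for a b
    by (rule integrable_continuous_real) (rule continuous_on_subset[OF g], auto)
  have H_eq: "H x = integral {a..x} g - integral {a..0} g" if "a \<le> x" "a \<le> 0" for a x
  proof (cases "0 \<le> x")
    case True
    then have "integral {a..0} g + integral {0..x} g = integral {a..x} g"
      using that int by (intro Henstock_Kurzweil_Integration.integral_combine) simp_all
    then show ?thesis using True by (cases "x = 0") (simp_all add: H_def)
  next
    case False
    then have "integral {a..x} g + integral {x..0} g = integral {a..0} g"
      using that int by (intro Henstock_Kurzweil_Integration.integral_combine) simp_all
    then show ?thesis using False by (simp add: H_def)
  qed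
  have "(H has_real_derivative g t) (at t)" for t
  proof -
    define a where "a = min 0 t - 1"
    have "((\<lambda>x. integral {a..x} g) has_real_derivative g t) (at t within {a..t+1})"
      by (rule integral_has_real_derivative) (auto intro: continuous_on_subset[OF g] simp: a_def)
    moreover have "t \<in> interior {a..t+1}"
      by (simp add: a_def)
    ultimately have "((\<lambda>x. integral {a..x} g) has_real_derivative g t) (at t)"
      using at_within_interior[of t "{a..t+1}"] by metis
    then have "((\<lambda>x. integral {a..x} g - integral {a..0} g) has_real_derivative g t) (at t)"
      using DERIV_diff[OF _ DERIV_const[of "integral {a..0} g"]] by fastforce
    then show ?thesis
      by (rule has_field_derivative_transform_within_open[where S="{a<..}"])
        (auto simp: a_def intro!: H_eq[symmetric])
  qed
  then show thesis by (rule that)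
qed

definition fwd_diff :: "real \<Rightarrow> (real \<Rightarrow> real) \<Rightarrow> real \<Rightarrow> real" where
  "fwd_diff \<eta> g t = (g (t + \<eta>) - g t) / \<eta>"

definition steklov_mean :: "real \<Rightarrow> (real \<Rightarrow> real) \<Rightarrow> real \<Rightarrow> real" where
  "steklov_mean \<eta> g t = integral {t..t + \<eta>} g / \<eta>"

lemma steklov_mean_eq_fwd_diff:
  assumes H: "\<And>t. (H has_real_derivative g t) (at t)" and "\<eta> > 0"
  shows "steklov_mean \<eta> g = fwd_diff \<eta> H"
proof
  fix t
  have "(g has_integral H (t + \<eta>) - H t) {t..t + \<eta>}"
    using assms by (intro fundamental_theorem_of_calculus)
      (auto simp: has_real_derivative_iff_has_vector_derivative[symmetric]
        intro: has_field_derivative_at_within)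
  then show "steklov_mean \<eta> g t = fwd_diff \<eta> H t"
    by (simp add: steklov_mean_def fwd_diff_def integral_unique)
qed

lemma DERIV_fwd_diff:
  assumes "\<And>t. (f has_real_derivative f' t) (at t)"
  shows "(fwd_diff \<eta> f has_real_derivative fwd_diff \<eta> f' t) (at t)"
proof -
  have "((\<lambda>t. f (t + \<eta>)) has_real_derivative f' (t + \<eta>)) (at t)"
    using assms DERIV_shift by blast
  then show ?thesis
    unfolding fwd_diff_def using assms by (intro DERIV_cdivide DERIV_diff)
qed

lemma DERIV_fwd_diff_iter:
  assumes "\<And>t. (f has_real_derivative f' t) (at t)"
  shows "((fwd_diff \<eta> ^^ j) f has_real_derivative (fwd_diff \<eta> ^^ j) f' t) (at t)"
  using assms by (induction j arbitrary: t) (simp_all add: DERIV_fwd_diff)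

lemma DERIV_steklov_mean:
  assumes "continuous_on UNIV g" "\<eta> > 0"
  shows "(steklov_mean \<eta> g has_real_derivative fwd_diff \<eta> g t) (at t)"
proof -
  obtain H where H: "\<And>t. (H has_real_derivative g t) (at t)"
    using continuous_has_antiderivative[OF assms(1)] by blast
  then show ?thesis
    using DERIV_fwd_diff[OF H] by (simp add: steklov_mean_eq_fwd_diff[OF H assms(2)])
qed

lemma continuous_steklov_mean:
  assumes "continuous_on UNIV g" "\<eta> > 0"
  shows "continuous_on UNIV (steklov_mean \<eta> g)"
  using DERIV_isCont[OF DERIV_steklov_mean[OF assms]] by (simp add: continuous_on_eq_continuous_at)

lemma continuous_fwd_diff:
  assumes "continuous_on UNIV g"
  shows "continuous_on UNIV (fwd_diff \<eta> g)"
  unfolding fwd_diff_def divide_inverse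
  by (intro continuous_intros continuous_on_compose2[OF assms]) auto

lemma steklov_mean_value:
  assumes "continuous_on UNIV g" "\<eta> > 0"
  obtains \<xi> where "t \<le> \<xi>" "\<xi> \<le> t + \<eta>" "steklov_mean \<eta> g t = g \<xi>"
proof -
  obtain H where H: "\<And>t. (H has_real_derivative g t) (at t)"
    using continuous_has_antiderivative[OF assms(1)] by blast
  then obtain \<xi> where "t < \<xi>" "\<xi> < t + \<eta>" "H (t + \<eta>) - H t = (t + \<eta> - t) * g \<xi>"
    using MVT2[of t "t + \<eta>" H g] assms(2) by auto
  with that[of \<xi>] show thesis
    using assms(2) by (simp add: steklov_mean_eq_fwd_diff[OF H] fwd_diff_def)
qed

lemma fwd_diff_riemann_sum:
  fixes n :: nat
  assumes H: "\<And>t. (H has_real_derivative g t) (at t)" and "\<eta> > 0" "n > 0"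
    and uc: "\<And>y z. y \<in> {t..t + \<eta>} \<Longrightarrow> z \<in> {t..t + \<eta>} \<Longrightarrow> \<bar>y - z\<bar> \<le> \<eta> / n \<Longrightarrow> \<bar>g y - g z\<bar> \<le> \<epsilon>"
  shows "\<bar>fwd_diff \<eta> H t - (\<Sum>i<n. g (t + i * (\<eta> / n)) / n)\<bar> \<le> \<epsilon>"
proof -
  define h where "h = \<eta> / n"
  have h: "h > 0" "n * h = \<eta>" using assms by (simp_all add: h_def)
  have piece: "\<bar>(H (t + Suc i * h) - H (t + i * h)) / \<eta> - g (t + i * h) / n\<bar> \<le> \<epsilon> / n"
    if "i < n" for i
  proof -
    obtain z where z: "t + i * h < z" "z < t + Suc i * h"
      and mvt: "H (t + Suc i * h) - H (t + i * h) = (t + Suc i * h - (t + i * h)) * g z"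
      using MVT2[of "t + i * h" "t + Suc i * h" H g] H h by (auto simp: algebra_simps)
    have "Suc i * h \<le> \<eta>"
      using that h mult_right_mono[of "Suc i" n h] by simp
    moreover have "0 \<le> i * h" "Suc i * h = i * h + h"
      using h by (simp_all add: algebra_simps)
    ultimately have "z \<in> {t..t + \<eta>}" "t + i * h \<in> {t..t + \<eta>}" "\<bar>z - (t + i * h)\<bar> \<le> \<eta> / n"
      unfolding atLeastAtMost_iff h_def[symmetric] using z by linarith+
    then have "\<bar>g z - g (t + i * h)\<bar> \<le> \<epsilon>"
      by (rule uc)
    moreover have "(H (t + Suc i * h) - H (t + i * h)) / \<eta> - g (t + i * h) / n
        = (g z - g (t + i * h)) / n"
      using mvt h(1) \<open>n > 0\<close> by (simp add: h(2)[symmetric] field_simps)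
    ultimately show ?thesis by (simp add: divide_right_mono)
  qed
  have "H (t + \<eta>) - H t = (\<Sum>i<n. H (t + Suc i * h) - H (t + i * h))"
    using sum_lessThan_telescope[of "\<lambda>i. H (t + i * h)" n] h by simp
  then have "fwd_diff \<eta> H t - (\<Sum>i<n. g (t + i * h) / n)
      = (\<Sum>i<n. (H (t + Suc i * h) - H (t + i * h)) / \<eta> - g (t + i * h) / n)"
    by (simp add: fwd_diff_def sum_subtractf sum_divide_distrib[symmetric] diff_divide_distrib)
  also have "\<bar>\<dots>\<bar> \<le> (\<Sum>i<n. \<epsilon> / n)"
    using piece by (intro order_trans[OF sum_abs] sum_mono) auto
  finally show ?thesis using assms by (simp add: h_def)
qed

lemma shallow1_approximable_steklov_mean:
  assumes g: "continuous_on UNIV g" "shallow1_approximable \<sigma> g" and "\<eta> > 0"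
  shows "shallow1_approximable \<sigma> (steklov_mean \<eta> g)"
proof (rule shallow1_approximable_limit)
  fix R \<epsilon> :: real assume "R > 0" "\<epsilon> > 0"
  obtain H where H: "\<And>t. (H has_real_derivative g t) (at t)"
    using continuous_has_antiderivative[OF g(1)] by blast
  have "uniformly_continuous_on {-R..R + \<eta>} g"
    by (rule compact_uniformly_continuous) (auto intro: continuous_on_subset[OF g(1)])
  then obtain \<delta> where "\<delta> > 0" and \<delta>: "\<And>y z. y \<in> {-R..R + \<eta>} \<Longrightarrow> z \<in> {-R..R + \<eta>} \<Longrightarrow>
      dist y z < \<delta> \<Longrightarrow> dist (g y) (g z) < \<epsilon>"
    unfolding uniformly_continuous_on_def using \<open>\<epsilon> > 0\<close> by metis
  obtain n :: nat where n: "\<eta> / \<delta> < n"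
    using reals_Archimedean2 by blast
  then have "n > 0"
    using \<open>\<delta> > 0\<close> \<open>\<eta> > 0\<close> by (metis divide_pos_pos of_nat_0 not_gr_zero order_less_asym)
  with n have "\<eta> / n < \<delta>"
    using \<open>\<delta> > 0\<close> by (simp add: field_simps)
  \<comment> \<open>the factor \<open>1\<close> lets \<open>shallow1_approximable_affine\<close> apply\<close>
  define \<psi> where "\<psi> t = (\<Sum>i<n. (1 / n) * g (1 * t + i * (\<eta> / n)))" for t
  have "shallow1_approximable \<sigma> \<psi>"
    unfolding \<psi>_def
    by (intro shallow1_approximable_sum shallow1_approximable_cmult shallow1_approximable_affine g(2))
  moreover have "\<bar>steklov_mean \<eta> g t - \<psi> t\<bar> \<le> \<epsilon>" if "\<bar>t\<bar> \<le> R" for t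
  proof -
    have "\<bar>g y - g z\<bar> \<le> \<epsilon>" if "y \<in> {t..t + \<eta>}" "z \<in> {t..t + \<eta>}" "\<bar>y - z\<bar> \<le> \<eta> / n" for y z
    proof -
      have "y \<in> {-R..R + \<eta>}" "z \<in> {-R..R + \<eta>}" "dist y z < \<delta>"
        using that \<open>\<bar>t\<bar> \<le> R\<close> \<open>\<eta> / n < \<delta>\<close> by (auto simp: dist_real_def abs_le_iff)
      from \<delta>[OF this] show ?thesis by (simp add: dist_real_def)
    qed
    from fwd_diff_riemann_sum[OF H \<open>\<eta> > 0\<close> \<open>n > 0\<close> this] show ?thesis
      by (simp add: steklov_mean_eq_fwd_diff[OF H \<open>\<eta> > 0\<close>] \<psi>_def)
  qed
  ultimately show "\<exists>g'. shallow1_approximable \<sigma> g' \<and> (\<forall>t. \<bar>t\<bar> \<le> R \<longrightarrow> \<bar>steklov_mean \<eta> g t - g' t\<bar> \<le> \<epsilon>)"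
    by blast
qed

lemma continuous_steklov_mean_iter:
  "continuous_on UNIV g \<Longrightarrow> \<eta> > 0 \<Longrightarrow> continuous_on UNIV ((steklov_mean \<eta> ^^ k) g)"
  by (induction k) (simp_all add: continuous_steklov_mean)

lemma shallow1_approximable_steklov_mean_iter:
  "continuous_on UNIV g \<Longrightarrow> shallow1_approximable \<sigma> g \<Longrightarrow> \<eta> > 0 \<Longrightarrow>
    shallow1_approximable \<sigma> ((steklov_mean \<eta> ^^ k) g)"
  by (induction k) (simp_all add: shallow1_approximable_steklov_mean continuous_steklov_mean_iter)

lemma steklov_mean_iter_value:
  assumes "continuous_on UNIV g" "\<eta> > 0"
  shows "\<exists>\<xi>. t \<le> \<xi> \<and> \<xi> \<le> t + k * \<eta> \<and> (steklov_mean \<eta> ^^ k) g t = g \<xi>"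
proof (induction k arbitrary: t)
  case 0 then show ?case by auto
next
  case (Suc k)
  obtain \<xi> where "t \<le> \<xi>" "\<xi> \<le> t + \<eta>" "(steklov_mean \<eta> ^^ Suc k) g t = (steklov_mean \<eta> ^^ k) g \<xi>"
    using steklov_mean_value[OF continuous_steklov_mean_iter[OF assms] assms(2)] by auto
  moreover obtain \<xi>' where "\<xi> \<le> \<xi>'" "\<xi>' \<le> \<xi> + k * \<eta>" "(steklov_mean \<eta> ^^ k) g \<xi> = g \<xi>'"
    using Suc.IH by blast
  ultimately show ?case
    by (intro exI[of _ \<xi>']) (simp add: algebra_simps)
qed

lemma bounded_steklov_mean_iter:
  assumes "continuous_on UNIV g" "\<eta> > 0" "bounded (range g)"
  shows "bounded (range ((steklov_mean \<eta> ^^ k) g))"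
  using steklov_mean_iter_value[OF assms(1,2)] by (intro bounded_subset[OF assms(3)]) blast

lemma bounded_fwd_diff:
  assumes "bounded (range g)"
  shows "bounded (range (fwd_diff \<eta> g))"
proof -
  obtain B where B: "\<And>t. \<bar>g t\<bar> \<le> B"
    using assms by (auto simp: bounded_iff)
  have "\<bar>fwd_diff \<eta> g t\<bar> \<le> 2 * B / \<bar>\<eta>\<bar>" for t
    using B[of t] B[of "t + \<eta>"] unfolding fwd_diff_def abs_divide
    by (intro divide_right_mono) linarith+
  then show ?thesis
    by (auto simp: bounded_iff)
qed

lemma bounded_fwd_diff_iter: "bounded (range g) \<Longrightarrow> bounded (range ((fwd_diff \<eta> ^^ j) g))"
  by (induction j) (simp_all add: bounded_fwd_diff)

lemma continuous_fwd_diff_iter: "continuous_on UNIV g \<Longrightarrow> continuous_on UNIV ((fwd_diff \<eta> ^^ j) g)"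
  by (induction j) (simp_all add: continuous_fwd_diff)

text \<open>The \<open>j\<close>-th derivative of the \<open>k\<close>-fold Steklov mean of \<open>\<sigma>\<close>: differentiating a Steklov
  mean produces a forward difference.\<close>

definition smoothed_diff :: "(real \<Rightarrow> real) \<Rightarrow> real \<Rightarrow> nat \<Rightarrow> nat \<Rightarrow> real \<Rightarrow> real" where
  "smoothed_diff \<sigma> \<eta> k j = (fwd_diff \<eta> ^^ j) ((steklov_mean \<eta> ^^ (k - j)) \<sigma>)"

lemma DERIV_smoothed_diff:
  assumes "continuous_on UNIV \<sigma>" "\<eta> > 0" "j < k"
  shows "(smoothed_diff \<sigma> \<eta> k j has_real_derivative smoothed_diff \<sigma> \<eta> k (Suc j) t) (at t)"
proof -
  define g where "g = (steklov_mean \<eta> ^^ (k - Suc j)) \<sigma>"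
  have "(steklov_mean \<eta> ^^ (k - j)) \<sigma> = steklov_mean \<eta> g"
  proof -
    have "k - j = Suc (k - Suc j)"
      using assms(3) by simp
    then show ?thesis by (simp add: g_def)
  qed
  moreover have "(steklov_mean \<eta> g has_real_derivative fwd_diff \<eta> g t) (at t)" for t
    unfolding g_def using assms by (intro DERIV_steklov_mean continuous_steklov_mean_iter)
  then have "((fwd_diff \<eta> ^^ j) (steklov_mean \<eta> g) has_real_derivative
      (fwd_diff \<eta> ^^ j) (fwd_diff \<eta> g) t) (at t)"
    by (rule DERIV_fwd_diff_iter)
  ultimately show ?thesis
    by (simp only: smoothed_diff_def g_def[symmetric] funpow_Suc_right comp_def)
qed

lemma bounded_smoothed_diff:
  assumes "continuous_on UNIV \<sigma>" "\<eta> > 0" "bounded (range \<sigma>)"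
  shows "bounded (range (smoothed_diff \<sigma> \<eta> k j))"
  unfolding smoothed_diff_def using assms by (intro bounded_fwd_diff_iter bounded_steklov_mean_iter)

section \<open>Powers as limits of shallow networks\<close>

lemma bounded_DERIV_const_eq_0:
  fixes f :: "real \<Rightarrow> real"
  assumes f: "\<And>t. (f has_real_derivative c) (at t)" and "bounded (range f)"
  shows "c = 0"
proof (rule ccontr)
  assume "c \<noteq> 0"
  obtain B where B: "\<And>t. \<bar>f t\<bar> \<le> B"
    using assms(2) by (auto simp: bounded_iff)
  have "((\<lambda>t. f t - c * t) has_real_derivative 0) (at t)" for t
    using DERIV_diff[OF f DERIV_cmult_Id[of c]] by simp
  then have "f t - c * t = f 0 - c * 0" for t
    using DERIV_isconst_all[of "\<lambda>t. f t - c * t" t 0] by simp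
  from this[of "(2 * B + 1) / c"] have "f ((2 * B + 1) / c) = f 0 + 2 * B + 1"
    using \<open>c \<noteq> 0\<close> by simp
  then show False
    using B[of 0] B[of "(2 * B + 1) / c"] by linarith
qed

lemma bounded_derivatives_vanishing_imp_const:
  fixes f :: "nat \<Rightarrow> real \<Rightarrow> real"
  assumes "\<And>j t. j < k \<Longrightarrow> (f j has_real_derivative f (Suc j) t) (at t)"
    and "\<And>j. j \<le> k \<Longrightarrow> bounded (range (f j))"
    and "\<And>t. f k t = 0"
  shows "f 0 s = f 0 t"
  using assms
proof (induction k arbitrary: f s t)
  case 0
  then show ?case by simp
next
  case (Suc k)
  have f1: "f 1 x = f 1 0" for x
    using Suc.IH[of "\<lambda>j. f (Suc j)" x 0] Suc.prems by simp
  have "(f 0 has_real_derivative f 1 0) (at x)" for x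
    using Suc.prems(1)[of 0 x] f1[of x] by simp
  moreover from this have "f 1 0 = 0"
    using Suc.prems(2)[of 0] by (intro bounded_DERIV_const_eq_0) auto
  ultimately have "\<forall>x. (f 0 has_real_derivative 0) (at x)"
    by simp
  then show ?case
    by (rule DERIV_isconst_all)
qed

lemma steklov_mean_iter_tendsto:
  assumes "continuous_on UNIV g"
  shows "((\<lambda>\<eta>. (steklov_mean \<eta> ^^ k) g t) \<longlongrightarrow> g t) (at_right 0)"
proof (rule tendstoI)
  fix \<epsilon> :: real assume "\<epsilon> > 0"
  then obtain \<delta> where "\<delta> > 0" and \<delta>: "\<And>y. dist y t < \<delta> \<Longrightarrow> dist (g y) (g t) < \<epsilon>"
    using assms unfolding continuous_on_eq_continuous_at[OF open_UNIV] continuous_at_eps_delta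
    by blast
  have "\<forall>\<^sub>F \<eta> in at_right 0. \<eta> \<in> {0<..<\<delta> / (k + 1)}"
    using \<open>\<delta> > 0\<close> by (intro eventually_at_right_real) simp
  then show "\<forall>\<^sub>F \<eta> in at_right 0. dist ((steklov_mean \<eta> ^^ k) g t) (g t) < \<epsilon>"
  proof eventually_elim
    case (elim \<eta>)
    then obtain \<xi> where \<xi>: "t \<le> \<xi>" "\<xi> \<le> t + k * \<eta>" "(steklov_mean \<eta> ^^ k) g t = g \<xi>"
      using steklov_mean_iter_value[OF assms, of \<eta>] by auto
    have "k * \<eta> < \<delta>"
      using elim by (auto simp: field_simps)
    then show ?case
      using \<delta>[of \<xi>] \<xi> by (simp add: dist_real_def)
  qed
qed

text \<open>Otherwise the \<open>k\<close>-fold Steklov means would be bounded with vanishing \<open>k\<close>-th derivative,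
  hence constant, and letting \<open>\<eta> \<rightarrow> 0\<close> would make \<open>\<sigma>\<close> constant.\<close>

lemma fwd_diff_iter_nonzero:
  assumes "continuous_on UNIV \<sigma>" "bounded (range \<sigma>)" "\<sigma> a \<noteq> \<sigma> b"
  obtains \<eta> c where "\<eta> > 0" "(fwd_diff \<eta> ^^ k) \<sigma> c \<noteq> 0"
proof (rule ccontr)
  assume "\<not> thesis"
  with that have zero: "(fwd_diff \<eta> ^^ k) \<sigma> c = 0" if "\<eta> > 0" for \<eta> c
    using \<open>\<eta> > 0\<close> by blast
  have const: "(steklov_mean \<eta> ^^ k) \<sigma> s = (steklov_mean \<eta> ^^ k) \<sigma> 0" if "\<eta> > 0" for \<eta> s
    using bounded_derivatives_vanishing_imp_const[of k "smoothed_diff \<sigma> \<eta> k" s 0]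
      DERIV_smoothed_diff[OF assms(1) that] bounded_smoothed_diff[OF assms(1) that assms(2)]
      zero[OF that]
    by (simp add: smoothed_diff_def)
  have "\<sigma> s = \<sigma> 0" for s
  proof (rule tendsto_unique[OF trivial_limit_at_right_real])
    show "((\<lambda>\<eta>. (steklov_mean \<eta> ^^ k) \<sigma> 0) \<longlongrightarrow> \<sigma> 0) (at_right 0)"
      by (rule steklov_mean_iter_tendsto[OF assms(1)])
    show "((\<lambda>\<eta>. (steklov_mean \<eta> ^^ k) \<sigma> 0) \<longlongrightarrow> \<sigma> s) (at_right 0)"
    proof (rule Lim_transform_eventually[OF steklov_mean_iter_tendsto[OF assms(1)]])
      show "\<forall>\<^sub>F \<eta> in at_right 0. (steklov_mean \<eta> ^^ k) \<sigma> s = (steklov_mean \<eta> ^^ k) \<sigma> 0"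
        using eventually_at_right_less by (rule eventually_mono) (rule const)
    qed
  qed
  then show False
    using assms(3) by metis
qed

definition scaled_taylor_remainder :: "(nat \<Rightarrow> real \<Rightarrow> real) \<Rightarrow> nat \<Rightarrow> real \<Rightarrow> real \<Rightarrow> real \<Rightarrow> real" where
  "scaled_taylor_remainder F m c l t = F 0 (l * t + c) - (\<Sum>j<m. (F j c / fact j * l ^ j) * t ^ j)"

lemma scaled_taylor_remainder_approx:
  fixes F :: "nat \<Rightarrow> real \<Rightarrow> real"
  assumes D: "\<And>j t. j < m \<Longrightarrow> (F j has_real_derivative F (Suc j) t) (at t)"
    and "isCont (F m) c" "R > 0" "\<epsilon> > 0"
  obtains l where "l > 0"
    "\<And>t. \<bar>t\<bar> \<le> R \<Longrightarrow> \<bar>scaled_taylor_remainder F m c l t * fact m / l ^ m - F m c * t ^ m\<bar> \<le> \<epsilon>"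
proof -
  have "\<epsilon> / (R ^ m + 1) > 0"
    using \<open>R > 0\<close> \<open>\<epsilon> > 0\<close> by (simp add: add_nonneg_pos)
  then obtain \<delta> where "\<delta> > 0"
    and \<delta>: "\<And>y. dist y c < \<delta> \<Longrightarrow> dist (F m y) (F m c) < \<epsilon> / (R ^ m + 1)"
    using assms(2) unfolding continuous_at_eps_delta by blast
  define l where "l = \<delta> / (2 * R)"
  have "l > 0"
    using \<open>\<delta> > 0\<close> \<open>R > 0\<close> by (simp add: l_def)
  moreover have "\<bar>scaled_taylor_remainder F m c l t * fact m / l ^ m - F m c * t ^ m\<bar> \<le> \<epsilon>"
    if "\<bar>t\<bar> \<le> R" for t
  proof -
    have "\<bar>l * t\<bar> < \<delta>"
      using that \<open>l > 0\<close> \<open>\<delta> > 0\<close> \<open>R > 0\<close> mult_left_mono[OF that, of l]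
      by (simp add: abs_mult l_def)
    have "\<forall>j s. j < m \<and> \<bar>s\<bar> \<le> \<bar>l * t\<bar> \<longrightarrow>
        ((\<lambda>y. F j (y + c)) has_real_derivative F (Suc j) (s + c)) (at s)"
      using D DERIV_shift by blast
    from Maclaurin_bi_le[OF refl this] obtain \<xi> where "\<bar>\<xi>\<bar> \<le> \<bar>l * t\<bar>" and
      "F 0 (l * t + c) = (\<Sum>j<m. F j c / fact j * (l * t) ^ j) + F m (\<xi> + c) / fact m * (l * t) ^ m"
      by auto
    then have "scaled_taylor_remainder F m c l t * fact m / l ^ m - F m c * t ^ m
        = (F m (\<xi> + c) - F m c) * t ^ m"
      using \<open>l > 0\<close> by (simp add: scaled_taylor_remainder_def power_mult_distrib field_simps)
    also have "\<bar>\<dots>\<bar> \<le> \<epsilon> / (R ^ m + 1) * R ^ m"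
      unfolding abs_mult power_abs using \<delta>[of "\<xi> + c"] \<open>\<bar>\<xi>\<bar> \<le> \<bar>l * t\<bar>\<close> \<open>\<bar>l * t\<bar> < \<delta>\<close> that
      by (intro mult_mono power_mono) (auto simp: dist_real_def)
    also have "\<dots> \<le> \<epsilon> / (R ^ m + 1) * (R ^ m + 1)"
      using \<open>\<epsilon> / (R ^ m + 1) > 0\<close> by (intro mult_left_mono) simp_all
    also have "\<dots> = \<epsilon>"
      using \<open>R > 0\<close> by (simp add: add_pos_pos less_imp_neq[symmetric])
    finally show ?thesis .
  qed
  ultimately show thesis
    using that by blast
qed

text \<open>A scaled Taylor expansion of the smoothed activation around a point where its \<open>m\<close>-th
  derivative does not vanish isolates \<open>t ^ m\<close> modulo lower powers.\<close>

lemma shallow1_approximable_power: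
  assumes \<sigma>: "continuous_on UNIV \<sigma>" "bounded (range \<sigma>)" "\<sigma> a \<noteq> \<sigma> b"
  shows "shallow1_approximable \<sigma> (\<lambda>t. t ^ m)"
proof (induction m rule: less_induct)
  case (less m)
  obtain \<eta> c where "\<eta> > 0" and "(fwd_diff \<eta> ^^ m) \<sigma> c \<noteq> 0"
    using fwd_diff_iter_nonzero[OF \<sigma>] by blast
  define F where "F = smoothed_diff \<sigma> \<eta> m"
  have "F m c \<noteq> 0"
    using \<open>(fwd_diff \<eta> ^^ m) \<sigma> c \<noteq> 0\<close> by (simp add: F_def smoothed_diff_def)
  have "isCont (F m) c"
    using continuous_fwd_diff_iter[OF \<sigma>(1)]
    by (simp add: F_def smoothed_diff_def continuous_on_eq_continuous_at)
  have "shallow1_approximable \<sigma> (F 0)"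
    unfolding F_def smoothed_diff_def using \<sigma>(1) shallow1_approximable_activation \<open>\<eta> > 0\<close>
    by (simp add: shallow1_approximable_steklov_mean_iter)
  show ?case
  proof (rule shallow1_approximable_limit)
    fix R \<epsilon> :: real assume "R > 0" "\<epsilon> > 0"
    then obtain l where "l > 0" and l: "\<And>t. \<bar>t\<bar> \<le> R \<Longrightarrow>
        \<bar>scaled_taylor_remainder F m c l t * fact m / l ^ m - F m c * t ^ m\<bar> \<le> \<epsilon> * \<bar>F m c\<bar>"
      using scaled_taylor_remainder_approx[of m F c R "\<epsilon> * \<bar>F m c\<bar>"] \<open>isCont (F m) c\<close>
        DERIV_smoothed_diff[OF \<sigma>(1) \<open>\<eta> > 0\<close>] \<open>F m c \<noteq> 0\<close> by (auto simp: F_def)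
    define g where "g t = fact m / (l ^ m * F m c) * scaled_taylor_remainder F m c l t" for t
    have "shallow1_approximable \<sigma> g"
      unfolding g_def scaled_taylor_remainder_def using \<open>shallow1_approximable \<sigma> (F 0)\<close>
      by (intro shallow1_approximable_cmult shallow1_approximable_diff shallow1_approximable_affine
          shallow1_approximable_sum less.IH)
    moreover have "\<bar>t ^ m - g t\<bar> \<le> \<epsilon>" if "\<bar>t\<bar> \<le> R" for t
    proof -
      have "t ^ m - g t = - (scaled_taylor_remainder F m c l t * fact m / l ^ m - F m c * t ^ m) / F m c"
        using \<open>F m c \<noteq> 0\<close> \<open>l > 0\<close> by (simp add: g_def field_simps)
      then show ?thesis
        using l[OF that] \<open>F m c \<noteq> 0\<close> by (simp add: abs_divide pos_divide_le_eq)
    qed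
    ultimately show "\<exists>g. shallow1_approximable \<sigma> g \<and> (\<forall>t. \<bar>t\<bar> \<le> R \<longrightarrow> \<bar>t ^ m - g t\<bar> \<le> \<epsilon>)"
      by blast
  qed
qed

section \<open>Shallow networks on the unit cube\<close>

definition lin_form :: "nat \<Rightarrow> (nat \<Rightarrow> real) \<Rightarrow> (nat \<Rightarrow> real) \<Rightarrow> real" where
  "lin_form d v x = (\<Sum>j=1..d. v j * x j)"

definition shallow_net ::
  "(real \<Rightarrow> real) \<Rightarrow> nat \<Rightarrow> (real \<times> (nat \<Rightarrow> real) \<times> real) list \<Rightarrow> (nat \<Rightarrow> real) \<Rightarrow> real" where
  "shallow_net \<sigma> d xs x = (\<Sum>(a, v, b)\<leftarrow>xs. a * \<sigma> (lin_form d v x + b))"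

definition shallow_approximable :: "(real \<Rightarrow> real) \<Rightarrow> nat \<Rightarrow> ((nat \<Rightarrow> real) \<Rightarrow> real) \<Rightarrow> bool" where
  "shallow_approximable \<sigma> d g \<longleftrightarrow>
     (\<forall>\<epsilon>>0. \<exists>c xs. \<forall>x\<in>unit_cube d. \<bar>g x - (c + shallow_net \<sigma> d xs x)\<bar> \<le> \<epsilon>)"

lemma lin_form_add_cmult: "lin_form d (\<lambda>j. v j + s * w j) x = lin_form d v x + s * lin_form d w x"
  by (simp add: lin_form_def sum.distrib sum_distrib_left algebra_simps)

lemma lin_form_coordinate: "i \<in> {1..d} \<Longrightarrow> lin_form d (\<lambda>j. if j = i then 1 else 0) x = x i"
  by (simp add: lin_form_def if_distrib[of "\<lambda>c. c * x _"] cong: if_cong)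

lemma lin_form_bound:
  assumes "x \<in> unit_cube d"
  shows "\<bar>lin_form d v x\<bar> \<le> (\<Sum>j=1..d. \<bar>v j\<bar>)"
  unfolding lin_form_def
proof (rule order_trans[OF sum_abs sum_mono])
  fix j assume "j \<in> {1..d}"
  then have "\<bar>x j\<bar> \<le> 1"
    using assms by (auto simp: unit_cube_def)
  then show "\<bar>v j * x j\<bar> \<le> \<bar>v j\<bar>"
    by (simp add: abs_mult mult_left_le)
qed

lemma continuous_on_lin_form: "continuous_on S (\<lambda>x. lin_form d v x)"
  unfolding lin_form_def
  by (intro continuous_intros continuous_on_subset[OF continuous_on_product_coordinates]) auto

lemma shallow_net_append: "shallow_net \<sigma> d (xs @ ys) x = shallow_net \<sigma> d xs x + shallow_net \<sigma> d ys x"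
  by (simp add: shallow_net_def)

lemma shallow_net_scale:
  "shallow_net \<sigma> d (map (\<lambda>(a, v, b). (k * a, v, b)) xs) x = k * shallow_net \<sigma> d xs x"
  by (induction xs) (auto simp: shallow_net_def algebra_simps)

lemma shallow_net_ridge:
  "shallow_net \<sigma> d (map (\<lambda>(a, w, b). (a, \<lambda>j. w * v j, b)) xs) x = shallow_net1 \<sigma> xs (lin_form d v x)"
  by (induction xs)
    (auto simp: shallow_net_def shallow_net1_def lin_form_def sum_distrib_left mult.assoc)

lemma shallow_net_eq_sum:
  "shallow_net \<sigma> d xs x
    = (\<Sum>i<length xs. fst (xs ! i) * \<sigma> (lin_form d (fst (snd (xs ! i))) x + snd (snd (xs ! i))))"
  unfolding shallow_net_def sum_list_sum_nth by (simp add: atLeast0LessThan case_prod_beta)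

lemma shallow_approximable_add:
  assumes "shallow_approximable \<sigma> d f" "shallow_approximable \<sigma> d g"
  shows "shallow_approximable \<sigma> d (\<lambda>x. f x + g x)"
  unfolding shallow_approximable_def
proof (intro allI impI)
  fix \<epsilon> :: real assume "\<epsilon> > 0"
  then obtain c1 xs1 c2 xs2 where f: "\<forall>x\<in>unit_cube d. \<bar>f x - (c1 + shallow_net \<sigma> d xs1 x)\<bar> \<le> \<epsilon>/2"
    and g: "\<forall>x\<in>unit_cube d. \<bar>g x - (c2 + shallow_net \<sigma> d xs2 x)\<bar> \<le> \<epsilon>/2"
    using assms half_gt_zero unfolding shallow_approximable_def by metis
  have "\<bar>f x + g x - (c1 + c2 + shallow_net \<sigma> d (xs1 @ xs2) x)\<bar> \<le> \<epsilon>" if "x \<in> unit_cube d" for x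
    using bspec[OF f that] bspec[OF g that] unfolding shallow_net_append by linarith
  then show "\<exists>c xs. \<forall>x\<in>unit_cube d. \<bar>f x + g x - (c + shallow_net \<sigma> d xs x)\<bar> \<le> \<epsilon>"
    by blast
qed

lemma shallow_approximable_cmult:
  assumes "shallow_approximable \<sigma> d f"
  shows "shallow_approximable \<sigma> d (\<lambda>x. k * f x)"
  unfolding shallow_approximable_def
proof (intro allI impI)
  fix \<epsilon> :: real assume "\<epsilon> > 0"
  then obtain c xs where approx: "\<forall>x\<in>unit_cube d. \<bar>f x - (c + shallow_net \<sigma> d xs x)\<bar> \<le> \<epsilon> / (\<bar>k\<bar> + 1)"
    using assms unfolding shallow_approximable_def
    by (metis divide_pos_pos abs_ge_zero add_nonneg_pos zero_less_one)
  have "\<bar>k * f x - (k * c + shallow_net \<sigma> d (map (\<lambda>(a, v, b). (k * a, v, b)) xs) x)\<bar> \<le> \<epsilon>"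
    if "x \<in> unit_cube d" for x
  proof -
    have "\<bar>k * f x - (k * c + shallow_net \<sigma> d (map (\<lambda>(a, v, b). (k * a, v, b)) xs) x)\<bar>
        = \<bar>k\<bar> * \<bar>f x - (c + shallow_net \<sigma> d xs x)\<bar>"
      by (simp only: shallow_net_scale) (simp add: abs_mult[symmetric] algebra_simps)
    also have "\<dots> \<le> (\<bar>k\<bar> + 1) * (\<epsilon> / (\<bar>k\<bar> + 1))"
      using approx that by (intro mult_mono) auto
    finally show ?thesis by simp
  qed
  then show "\<exists>c xs. \<forall>x\<in>unit_cube d. \<bar>k * f x - (c + shallow_net \<sigma> d xs x)\<bar> \<le> \<epsilon>"
    by blast
qed

lemma shallow_approximable_limit:
  assumes "\<And>\<epsilon>. \<epsilon> > 0 \<Longrightarrow> \<exists>g. shallow_approximable \<sigma> d g \<and> (\<forall>x\<in>unit_cube d. \<bar>f x - g x\<bar> \<le> \<epsilon>)"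
  shows "shallow_approximable \<sigma> d f"
  unfolding shallow_approximable_def
proof (intro allI impI)
  fix \<epsilon> :: real assume "\<epsilon> > 0"
  then obtain g where g: "shallow_approximable \<sigma> d g" "\<forall>x\<in>unit_cube d. \<bar>f x - g x\<bar> \<le> \<epsilon>/2"
    using assms[of "\<epsilon>/2"] by auto
  then obtain c xs where approx: "\<forall>x\<in>unit_cube d. \<bar>g x - (c + shallow_net \<sigma> d xs x)\<bar> \<le> \<epsilon>/2"
    using \<open>\<epsilon> > 0\<close> unfolding shallow_approximable_def by (meson half_gt_zero)
  have "\<bar>f x - (c + shallow_net \<sigma> d xs x)\<bar> \<le> \<epsilon>" if "x \<in> unit_cube d" for x
    using bspec[OF g(2) that] bspec[OF approx that] by linarith
  then show "\<exists>c xs. \<forall>x\<in>unit_cube d. \<bar>f x - (c + shallow_net \<sigma> d xs x)\<bar> \<le> \<epsilon>"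
    by blast
qed

lemma shallow_approximable_ridge:
  assumes "shallow1_approximable \<sigma> \<phi>"
  shows "shallow_approximable \<sigma> d (\<lambda>x. \<phi> (lin_form d v x))"
  unfolding shallow_approximable_def
proof (intro allI impI)
  fix \<epsilon> :: real assume "\<epsilon> > 0"
  define R where "R = (\<Sum>j=1..d. \<bar>v j\<bar>) + 1"
  have "R > 0"
    unfolding R_def by (simp add: add_nonneg_pos sum_nonneg)
  then obtain c xs where approx: "\<forall>t. \<bar>t\<bar> \<le> R \<longrightarrow> \<bar>\<phi> t - (c + shallow_net1 \<sigma> xs t)\<bar> \<le> \<epsilon>"
    using assms \<open>\<epsilon> > 0\<close> unfolding shallow1_approximable_def by blast
  have "\<bar>\<phi> (lin_form d v x) - (c + shallow_net \<sigma> d (map (\<lambda>(a, w, b). (a, \<lambda>j. w * v j, b)) xs) x)\<bar> \<le> \<epsilon>"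
    if "x \<in> unit_cube d" for x
    using approx lin_form_bound[OF that, of v] by (simp add: R_def shallow_net_ridge)
  then show "\<exists>c xs. \<forall>x\<in>unit_cube d. \<bar>\<phi> (lin_form d v x) - (c + shallow_net \<sigma> d xs x)\<bar> \<le> \<epsilon>"
    by blast
qed

lemma power_increment_error:
  fixes B :: real
  assumes "B \<ge> 0"
  shows "\<exists>C. \<forall>a b s :: real. \<bar>a\<bar> \<le> B \<longrightarrow> \<bar>b\<bar> \<le> B \<longrightarrow> \<bar>s\<bar> \<le> 1 \<longrightarrow>
     \<bar>(a + s * b) ^ Suc n - a ^ Suc n - real (Suc n) * s * a ^ n * b\<bar> \<le> C * s\<^sup>2"
proof (induction n)
  case 0
  show ?case by (rule exI[of _ 0]) simp
next
  case (Suc n)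
  then obtain C where C: "\<forall>a b s. \<bar>a\<bar> \<le> B \<longrightarrow> \<bar>b\<bar> \<le> B \<longrightarrow> \<bar>s\<bar> \<le> 1 \<longrightarrow>
     \<bar>(a + s * b) ^ Suc n - a ^ Suc n - real (Suc n) * s * a ^ n * b\<bar> \<le> C * s\<^sup>2"
    by blast
  show ?case
  proof (rule exI[of _ "2 * B * C + real (Suc n) * B ^ (n + 2)"], intro allI impI)
    fix a b s :: real assume a: "\<bar>a\<bar> \<le> B" and b: "\<bar>b\<bar> \<le> B" and s: "\<bar>s\<bar> \<le> 1"
    define E where "E = (a + s * b) ^ Suc n - a ^ Suc n - real (Suc n) * s * a ^ n * b"
    have E: "\<bar>E\<bar> \<le> C * s\<^sup>2"
      using C a b s by (simp add: E_def)
    have "\<bar>s * b\<bar> \<le> 1 * B"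
      unfolding abs_mult using s b by (intro mult_mono) auto
    then have "\<bar>a + s * b\<bar> \<le> 2 * B"
      using a abs_triangle_ineq[of a "s * b"] by linarith
    then have t1: "\<bar>(a + s * b) * E\<bar> \<le> 2 * B * (C * s\<^sup>2)"
      unfolding abs_mult using E \<open>B \<ge> 0\<close> by (intro mult_mono) auto
    have ab: "\<bar>a ^ n * b\<^sup>2\<bar> \<le> B ^ (n + 2)"
      unfolding abs_mult power_abs power_add using a b by (intro mult_mono power_mono) auto
    have t2: "\<bar>real (Suc n) * s\<^sup>2 * (a ^ n * b\<^sup>2)\<bar> \<le> real (Suc n) * s\<^sup>2 * B ^ (n + 2)"
      using mult_left_mono[OF ab, of "real (Suc n) * s\<^sup>2"] by (simp add: abs_mult)
    have "(a + s * b) ^ Suc (Suc n) - a ^ Suc (Suc n) - real (Suc (Suc n)) * s * a ^ Suc n * b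
        = (a + s * b) * E + real (Suc n) * s\<^sup>2 * (a ^ n * b\<^sup>2)"
      by (simp add: E_def algebra_simps power2_eq_square)
    also have "\<bar>\<dots>\<bar> \<le> (2 * B * C + real (Suc n) * B ^ (n + 2)) * s\<^sup>2"
      using t1 t2 abs_triangle_ineq[of "(a + s * b) * E" "real (Suc n) * s\<^sup>2 * (a ^ n * b\<^sup>2)"]
      by (simp add: algebra_simps)
    finally show "\<bar>(a + s * b) ^ Suc (Suc n) - a ^ Suc (Suc n) - real (Suc (Suc n)) * s * a ^ Suc n * b\<bar>
        \<le> (2 * B * C + real (Suc n) * B ^ (n + 2)) * s\<^sup>2" .
  qed
qed

lemma power_difference_quotient_error:
  fixes B :: real
  assumes "B \<ge> 0"
  obtains C where "C \<ge> 0" "\<And>a b s :: real. \<bar>a\<bar> \<le> B \<Longrightarrow> \<bar>b\<bar> \<le> B \<Longrightarrow> 0 < s \<Longrightarrow> s \<le> 1 \<Longrightarrow>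
    \<bar>((a + s * b) ^ Suc n - a ^ Suc n) / (real (Suc n) * s) - a ^ n * b\<bar> \<le> C * s"
proof -
  obtain C where C: "\<And>a b s :: real. \<bar>a\<bar> \<le> B \<Longrightarrow> \<bar>b\<bar> \<le> B \<Longrightarrow> \<bar>s\<bar> \<le> 1 \<Longrightarrow>
     \<bar>(a + s * b) ^ Suc n - a ^ Suc n - real (Suc n) * s * a ^ n * b\<bar> \<le> C * s\<^sup>2"
    using power_increment_error[OF assms, of n] by blast
  have "C \<ge> 0"
    using C[of 0 0 1] assms by simp
  moreover have "\<bar>((a + s * b) ^ Suc n - a ^ Suc n) / (real (Suc n) * s) - a ^ n * b\<bar> \<le> C * s"
    if "\<bar>a\<bar> \<le> B" "\<bar>b\<bar> \<le> B" "0 < s" "s \<le> 1" for a b s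
  proof -
    have "((a + s * b) ^ Suc n - a ^ Suc n) / (real (Suc n) * s) - a ^ n * b
        = ((a + s * b) ^ Suc n - a ^ Suc n - real (Suc n) * s * a ^ n * b) / (real (Suc n) * s)"
      using \<open>0 < s\<close> by (simp add: field_simps del: of_nat_Suc)
    also have "\<bar>\<dots>\<bar> \<le> C * s\<^sup>2 / (1 * s)"
      unfolding abs_divide using C[of a b s] that \<open>C \<ge> 0\<close>
      by (intro frac_le mult_right_mono) auto
    also have "\<dots> = C * s"
      using \<open>0 < s\<close> by (simp add: power2_eq_square)
    finally show ?thesis .
  qed
  ultimately show thesis
    using that by blast
qed

lemma lin_form_prod_bound:
  assumes "x \<in> unit_cube d"
  shows "\<bar>\<Prod>w\<leftarrow>ws. lin_form d w x\<bar> \<le> (\<Prod>w\<leftarrow>ws. \<Sum>j=1..d. \<bar>w j\<bar>)"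
proof (induction ws)
  case Nil
  then show ?case by simp
next
  case (Cons w ws)
  then show ?case
    unfolding list.map prod_list.Cons abs_mult
    using lin_form_bound[OF assms, of w] by (intro mult_mono) auto
qed

lemma shallow_approximable_linear_rate:
  assumes "\<And>s. 0 < s \<Longrightarrow> s \<le> 1 \<Longrightarrow> shallow_approximable \<sigma> d (g s)"
    and "\<And>s x. 0 < s \<Longrightarrow> s \<le> 1 \<Longrightarrow> x \<in> unit_cube d \<Longrightarrow> \<bar>f x - g s x\<bar> \<le> K * s"
    and "K \<ge> 0"
  shows "shallow_approximable \<sigma> d f"
proof (rule shallow_approximable_limit)
  fix \<epsilon> :: real assume "\<epsilon> > 0"
  define s where "s = min 1 (\<epsilon> / (K + 1))"
  have s: "0 < s" "s \<le> 1"
    using \<open>\<epsilon> > 0\<close> \<open>K \<ge> 0\<close> by (simp_all add: s_def)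
  have "K * s \<le> (K + 1) * (\<epsilon> / (K + 1))"
    using s \<open>K \<ge> 0\<close> by (intro mult_mono) (simp_all add: s_def)
  then have "K * s \<le> \<epsilon>"
    using \<open>K \<ge> 0\<close> by simp
  then show "\<exists>g. shallow_approximable \<sigma> d g \<and> (\<forall>x\<in>unit_cube d. \<bar>f x - g x\<bar> \<le> \<epsilon>)"
    using assms(1)[OF s] assms(2)[OF s] by (meson order_trans)
qed

text \<open>The factor \<open>a ^ m * b\<close> is the limit of \<open>((a + s * b) ^ Suc m - a ^ Suc m) / (Suc m * s)\<close>
  as \<open>s \<rightarrow> 0\<close>, a difference of two powers of linear forms.\<close>

lemma shallow_approximable_lin_form_prod:
  assumes \<sigma>: "continuous_on UNIV \<sigma>" "bounded (range \<sigma>)" "\<sigma> a \<noteq> \<sigma> b"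
  shows "shallow_approximable \<sigma> d (\<lambda>x. lin_form d v x ^ m * (\<Prod>w\<leftarrow>ws. lin_form d w x))"
proof (induction ws arbitrary: v m)
  case Nil
  show ?case
    using shallow_approximable_ridge[OF shallow1_approximable_power[OF \<sigma>, of m], of d v] by simp
next
  case (Cons w ws)
  define P where "P = (\<Prod>w\<leftarrow>ws. \<Sum>j=1..d. \<bar>w j\<bar>)"
  define B where "B = (\<Sum>j=1..d. \<bar>v j\<bar>) + (\<Sum>j=1..d. \<bar>w j\<bar>)"
  have "P \<ge> 0"
    unfolding P_def by (induction ws) (simp_all add: sum_nonneg)
  moreover have "B \<ge> 0"
    by (simp add: B_def sum_nonneg)
  ultimately obtain C where "C \<ge> 0" and C: "\<And>a b s :: real. \<bar>a\<bar> \<le> B \<Longrightarrow> \<bar>b\<bar> \<le> B \<Longrightarrow> 0 < s \<Longrightarrow> s \<le> 1 \<Longrightarrow>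
    \<bar>((a + s * b) ^ Suc m - a ^ Suc m) / (real (Suc m) * s) - a ^ m * b\<bar> \<le> C * s"
    using power_difference_quotient_error by blast
  define g where "g s x = (1 / (real (Suc m) * s)) *
    (lin_form d (\<lambda>j. v j + s * w j) x ^ Suc m * (\<Prod>w\<leftarrow>ws. lin_form d w x)
     + (-1) * (lin_form d v x ^ Suc m * (\<Prod>w\<leftarrow>ws. lin_form d w x)))" for s x
  show ?case
  proof (rule shallow_approximable_linear_rate)
    show "shallow_approximable \<sigma> d (g s)" for s
      unfolding g_def by (intro shallow_approximable_cmult shallow_approximable_add Cons.IH)
    show "\<bar>lin_form d v x ^ m * (\<Prod>w\<leftarrow>w # ws. lin_form d w x) - g s x\<bar> \<le> C * P * s"
      if "0 < s" "s \<le> 1" "x \<in> unit_cube d" for s x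
    proof -
      define a where "a = lin_form d v x"
      define b where "b = lin_form d w x"
      define Q where "Q = (\<Prod>w\<leftarrow>ws. lin_form d w x)"
      have "\<bar>a\<bar> \<le> B" "\<bar>b\<bar> \<le> B"
        using lin_form_bound[OF that(3), of v] lin_form_bound[OF that(3), of w] \<open>B \<ge> 0\<close>
        by (auto simp: a_def b_def B_def sum_nonneg)
      have "lin_form d v x ^ m * (\<Prod>w\<leftarrow>w # ws. lin_form d w x) - g s x
          = - ((((a + s * b) ^ Suc m - a ^ Suc m) / (real (Suc m) * s) - a ^ m * b) * Q)"
        using \<open>0 < s\<close>
        by (simp add: g_def a_def b_def Q_def lin_form_add_cmult field_simps del: of_nat_Suc)
      also have "\<bar>\<dots>\<bar> \<le> C * s * P"
        unfolding abs_minus_cancel abs_mult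
        using C[OF \<open>\<bar>a\<bar> \<le> B\<close> \<open>\<bar>b\<bar> \<le> B\<close> that(1,2)] lin_form_prod_bound[OF that(3), of ws] \<open>C \<ge> 0\<close>
        by (intro mult_mono) (auto simp: Q_def P_def)
      finally show ?thesis
        by (simp add: mult_ac)
    qed
    show "C * P \<ge> 0"
      using \<open>C \<ge> 0\<close> \<open>P \<ge> 0\<close> by simp
  qed
qed

inductive_set cube_monomials :: "nat \<Rightarrow> ((nat \<Rightarrow> real) \<Rightarrow> real) set" for d where
  const: "(\<lambda>x. c) \<in> cube_monomials d"
| coord: "i \<in> {1..d} \<Longrightarrow> \<pi> \<in> cube_monomials d \<Longrightarrow> (\<lambda>x. x i * \<pi> x) \<in> cube_monomials d"

inductive_set cube_polynomials :: "nat \<Rightarrow> ((nat \<Rightarrow> real) \<Rightarrow> real) set" for d where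
  monomial: "\<pi> \<in> cube_monomials d \<Longrightarrow> \<pi> \<in> cube_polynomials d"
| add: "f \<in> cube_polynomials d \<Longrightarrow> g \<in> cube_polynomials d \<Longrightarrow> (\<lambda>x. f x + g x) \<in> cube_polynomials d"

lemma cube_monomials_cmult: "\<pi> \<in> cube_monomials d \<Longrightarrow> (\<lambda>x. k * \<pi> x) \<in> cube_monomials d"
proof (induction rule: cube_monomials.induct)
  case (const c)
  show ?case using cube_monomials.const[of "k * c" d] by simp
next
  case (coord i \<pi>)
  then have "(\<lambda>x. x i * (k * \<pi> x)) \<in> cube_monomials d"
    by (intro cube_monomials.coord)
  then show ?case by (simp add: mult.left_commute)
qed

lemma cube_monomials_mult:
  "\<pi> \<in> cube_monomials d \<Longrightarrow> \<pi>' \<in> cube_monomials d \<Longrightarrow> (\<lambda>x. \<pi> x * \<pi>' x) \<in> cube_monomials d"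
proof (induction rule: cube_monomials.induct)
  case (const c)
  then show ?case using cube_monomials_cmult by blast
next
  case (coord i \<pi>)
  then have "(\<lambda>x. x i * (\<pi> x * \<pi>' x)) \<in> cube_monomials d"
    by (intro cube_monomials.coord) auto
  then show ?case by (simp add: mult.assoc)
qed

lemma cube_polynomials_mult_monomial:
  "f \<in> cube_polynomials d \<Longrightarrow> \<pi> \<in> cube_monomials d \<Longrightarrow> (\<lambda>x. f x * \<pi> x) \<in> cube_polynomials d"
proof (induction rule: cube_polynomials.induct)
  case (monomial \<pi>')
  then show ?case using cube_monomials_mult by (blast intro: cube_polynomials.monomial)
next
  case (add f g)
  then have "(\<lambda>x. f x * \<pi> x + g x * \<pi> x) \<in> cube_polynomials d"
    by (intro cube_polynomials.add) auto
  then show ?case by (simp add: distrib_right)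
qed

lemma cube_polynomials_mult:
  "g \<in> cube_polynomials d \<Longrightarrow> f \<in> cube_polynomials d \<Longrightarrow> (\<lambda>x. f x * g x) \<in> cube_polynomials d"
proof (induction rule: cube_polynomials.induct)
  case (monomial \<pi>)
  then show ?case using cube_polynomials_mult_monomial by blast
next
  case (add g1 g2)
  then have "(\<lambda>x. f x * g1 x + f x * g2 x) \<in> cube_polynomials d"
    by (intro cube_polynomials.add) auto
  then show ?case by (simp add: distrib_left)
qed

lemma continuous_on_cube_polynomial: "f \<in> cube_polynomials d \<Longrightarrow> continuous_on (unit_cube d) f"
proof (induction rule: cube_polynomials.induct)
  case (monomial \<pi>)
  then show ?case
  proof (induction rule: cube_monomials.induct)
    case (const c)
    then show ?case by (rule continuous_on_const)
  next
    case (coord i \<pi>)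
    have "continuous_on (unit_cube d) (\<lambda>x. x i)"
      by (rule continuous_on_subset[OF continuous_on_product_coordinates]) simp
    then show ?case using coord by (intro continuous_on_mult) auto
  qed
next
  case (add f g)
  then show ?case by (intro continuous_on_add) auto
qed

lemma compact_unit_cube: "compact (unit_cube d)"
proof -
  define K where "K i = (if i \<in> {1..d} then {0..1::real} else {0})" for i
  have "unit_cube d = PiE UNIV K"
    by (auto simp: unit_cube_def K_def PiE_def Pi_def split: if_splits)
  moreover have "compactin (product_topology (\<lambda>_. euclidean) UNIV) (PiE UNIV K)"
    by (subst compactin_PiE) (auto simp: K_def)
  ultimately show ?thesis
    by (simp add: euclidean_product_topology)
qed

lemma bounded_image_unit_cube: "continuous_on (unit_cube d) g \<Longrightarrow> bounded (g ` unit_cube d)"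
  by (intro compact_imp_bounded compact_continuous_image compact_unit_cube)

lemma cube_polynomials_dense:
  assumes "continuous_on (unit_cube d) f" "\<epsilon> > 0"
  obtains g where "g \<in> cube_polynomials d" "\<forall>x\<in>unit_cube d. \<bar>f x - g x\<bar> < \<epsilon>"
proof -
  have "\<exists>g. g \<in> cube_polynomials d \<and> (\<forall>x\<in>unit_cube d. \<bar>f x - g x\<bar> < \<epsilon>)"
  proof (rule Stone_Weierstrass_HOL[OF compact_unit_cube _ _ _ _ _ assms])
    show "(\<lambda>x. c) \<in> cube_polynomials d" for c
      by (intro cube_polynomials.monomial cube_monomials.const)
    show "continuous_on (unit_cube d) g" if "g \<in> cube_polynomials d" for g
      using that by (rule continuous_on_cube_polynomial)
    show "(\<lambda>x. g x + g' x) \<in> cube_polynomials d"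
      if "g \<in> cube_polynomials d \<and> g' \<in> cube_polynomials d" for g g'
      using that by (intro cube_polynomials.add) auto
    show "(\<lambda>x. g x * g' x) \<in> cube_polynomials d"
      if "g \<in> cube_polynomials d \<and> g' \<in> cube_polynomials d" for g g'
      using that cube_polynomials_mult by blast
    show "\<exists>g. g \<in> cube_polynomials d \<and> g x \<noteq> g y"
      if xy: "x \<in> unit_cube d \<and> y \<in> unit_cube d \<and> x \<noteq> y" for x y
    proof -
      obtain i where "x i \<noteq> y i"
        using xy by (auto simp: fun_eq_iff)
      moreover from this have "i \<in> {1..d}"
        using xy by (auto simp: unit_cube_def)
      then have "(\<lambda>x. x i * 1) \<in> cube_polynomials d"
        by (intro cube_polynomials.monomial cube_monomials.coord cube_monomials.const)
      ultimately show ?thesis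
        by (intro exI[of _ "\<lambda>x. x i * 1"]) simp
    qed
  qed
  with that show thesis by blast
qed

lemma shallow_approximable_cube_monomial:
  assumes \<sigma>: "continuous_on UNIV \<sigma>" "bounded (range \<sigma>)" "\<sigma> a \<noteq> \<sigma> b"
    and "\<pi> \<in> cube_monomials d"
  shows "shallow_approximable \<sigma> d (\<lambda>x. (\<Prod>w\<leftarrow>ws. lin_form d w x) * \<pi> x)"
  using assms(4)
proof (induction arbitrary: ws rule: cube_monomials.induct)
  case (const c)
  have "shallow_approximable \<sigma> d (\<lambda>x. c * (lin_form d (\<lambda>j. 0) x ^ 0 * (\<Prod>w\<leftarrow>ws. lin_form d w x)))"
    by (intro shallow_approximable_cmult shallow_approximable_lin_form_prod[OF \<sigma>])
  then show ?case
    by (simp add: mult.commute)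
next
  case (coord i \<pi>)
  have "shallow_approximable \<sigma> d (\<lambda>x. (\<Prod>w\<leftarrow>(\<lambda>j. if j = i then 1 else 0) # ws. lin_form d w x) * \<pi> x)"
    by (rule coord.IH)
  then show ?case
    using lin_form_coordinate[OF coord.hyps(1)] by (simp add: mult_ac)
qed

lemma shallow_approximable_cube_polynomial:
  assumes \<sigma>: "continuous_on UNIV \<sigma>" "bounded (range \<sigma>)" "\<sigma> a \<noteq> \<sigma> b"
  shows "f \<in> cube_polynomials d \<Longrightarrow> shallow_approximable \<sigma> d f"
proof (induction rule: cube_polynomials.induct)
  case (monomial \<pi>)
  then show ?case
    using shallow_approximable_cube_monomial[OF \<sigma> monomial, of "[]"] by simp
next
  case (add f g)
  then show ?case
    by (intro shallow_approximable_add)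
qed

theorem shallow_approximable_continuous:
  assumes \<sigma>: "continuous_on UNIV \<sigma>" "bounded (range \<sigma>)" "\<sigma> a \<noteq> \<sigma> b"
    and f: "continuous_on (unit_cube d) f"
  shows "shallow_approximable \<sigma> d f"
proof (rule shallow_approximable_limit)
  fix \<epsilon> :: real assume "\<epsilon> > 0"
  with f obtain g where "g \<in> cube_polynomials d" "\<forall>x\<in>unit_cube d. \<bar>f x - g x\<bar> < \<epsilon>"
    by (rule cube_polynomials_dense)
  then show "\<exists>g. shallow_approximable \<sigma> d g \<and> (\<forall>x\<in>unit_cube d. \<bar>f x - g x\<bar> \<le> \<epsilon>)"
    using shallow_approximable_cube_polynomial[OF \<sigma>] less_imp_le by blast
qed

section \<open>Uniform limits as the scale tends to zero\<close>

lemma uniform_limit_sum: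
  fixes f :: "'i \<Rightarrow> 'b \<Rightarrow> 'a \<Rightarrow> 'c::real_normed_vector"
  assumes "finite I" "\<And>i. i \<in> I \<Longrightarrow> uniform_limit S (f i) (l i) F"
  shows "uniform_limit S (\<lambda>h x. \<Sum>i\<in>I. f i h x) (\<lambda>x. \<Sum>i\<in>I. l i x) F"
  using assms by (induction I rule: finite_induct) (auto intro: uniform_limit_add uniform_limit_const)

lemma uniform_limit_continuous_compose:
  fixes f :: "real \<Rightarrow> real"
  assumes "continuous_on UNIV f" "uniform_limit S g g0 F" "bounded (g0 ` S)"
  shows "uniform_limit S (\<lambda>h x. f (g h x)) (\<lambda>x. f (g0 x)) F"
proof -
  obtain M where M: "\<And>x. x \<in> S \<Longrightarrow> \<bar>g0 x\<bar> \<le> M"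
    using assms(3) by (auto simp: bounded_iff)
  have "\<forall>\<^sub>F h in F. \<forall>x\<in>S. dist (g h x) (g0 x) < 1"
    using assms(2) by (rule uniform_limitD) simp
  then have "\<forall>\<^sub>F h in F. \<forall>x\<in>S. g h x \<in> cball 0 (M + 1)"
    by eventually_elim (use M in \<open>fastforce simp: dist_real_def\<close>)
  moreover have "uniformly_continuous_on (cball 0 (M + 1)) f"
    using assms(1) by (intro compact_uniformly_continuous) (auto intro: continuous_on_subset)
  ultimately show ?thesis
    using uniform_limit_compose_uniformly_continuous_on[OF assms(2)] closed_cball by blast
qed

lemma DERIV_linear_approx:
  assumes "(\<sigma> has_real_derivative sd) (at t0)" "e > 0"
  shows "\<exists>\<eta>>0. \<forall>v. \<bar>v\<bar> < \<eta> \<longrightarrow> \<bar>\<sigma> (t0 + v) - \<sigma> t0 - sd * v\<bar> \<le> e * \<bar>v\<bar>"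
proof -
  have "((\<lambda>v. (\<sigma> (t0 + v) - \<sigma> t0) / v) \<longlongrightarrow> sd) (at 0)"
    using assms(1) by (simp add: DERIV_def)
  from LIM_D[OF this \<open>e > 0\<close>] obtain \<eta> where "\<eta> > 0"
    and \<eta>: "\<forall>v. v \<noteq> 0 \<and> norm (v - 0) < \<eta> \<longrightarrow> norm ((\<sigma> (t0 + v) - \<sigma> t0) / v - sd) < e"
    by blast
  have bound: "\<bar>\<sigma> (t0 + v) - \<sigma> t0 - sd * v\<bar> \<le> e * \<bar>v\<bar>" if "\<bar>v\<bar> < \<eta>" for v
  proof (cases "v = 0")
    case False
    then have "\<sigma> (t0 + v) - \<sigma> t0 - sd * v = ((\<sigma> (t0 + v) - \<sigma> t0) / v - sd) * v"
      by (simp add: field_simps)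
    moreover have "\<bar>(\<sigma> (t0 + v) - \<sigma> t0) / v - sd\<bar> \<le> e"
      using \<eta>[rule_format, of v] that False by simp
    ultimately show ?thesis
      by (simp add: abs_mult mult_right_mono)
  qed simp
  with \<open>\<eta> > 0\<close> show ?thesis
    by blast
qed

lemma linearization_error_eventually:
  assumes "(\<sigma> has_real_derivative sd) (at t0)" "sd \<noteq> 0" "\<delta> > 0"
  shows "\<forall>\<^sub>F h in at_right 0. \<forall>u. \<bar>u\<bar> \<le> R \<longrightarrow> \<bar>(\<sigma> (t0 + h * u) - \<sigma> t0) / (h * sd) - u\<bar> \<le> \<delta>"
proof -
  define e where "e = \<delta> * \<bar>sd\<bar> / (\<bar>R\<bar> + 1)"
  have "e > 0"
    using assms by (simp add: e_def add_nonneg_pos)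
  then obtain \<eta> where "\<eta> > 0"
    and \<eta>: "\<And>v. \<bar>v\<bar> < \<eta> \<Longrightarrow> \<bar>\<sigma> (t0 + v) - \<sigma> t0 - sd * v\<bar> \<le> e * \<bar>v\<bar>"
    using DERIV_linear_approx[OF assms(1)] by blast
  have "\<forall>\<^sub>F h in at_right 0. h \<in> {0<..<\<eta> / (\<bar>R\<bar> + 1)}"
    using \<open>\<eta> > 0\<close> by (intro eventually_at_right_real) (simp add: add_nonneg_pos)
  then show ?thesis
  proof (rule eventually_mono, intro allI impI)
    fix h u assume h: "h \<in> {0<..<\<eta> / (\<bar>R\<bar> + 1)}" and u: "\<bar>u\<bar> \<le> R"
    have "\<bar>h * u\<bar> \<le> h * (\<bar>R\<bar> + 1)"
      using h u by (simp add: abs_mult mult_left_mono)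
    also have "\<dots> < \<eta>"
      using h by (simp add: pos_less_divide_eq[symmetric] add_nonneg_pos)
    finally have "\<bar>\<sigma> (t0 + h * u) - \<sigma> t0 - sd * (h * u)\<bar> \<le> e * (h * \<bar>u\<bar>)"
      using \<eta>[of "h * u"] h by (simp add: abs_mult)
    moreover have "(\<sigma> (t0 + h * u) - \<sigma> t0) / (h * sd) - u = (\<sigma> (t0 + h * u) - \<sigma> t0 - sd * (h * u)) / (h * sd)"
      using h assms(2) by (simp add: field_simps)
    ultimately have "\<bar>(\<sigma> (t0 + h * u) - \<sigma> t0) / (h * sd) - u\<bar> \<le> e * \<bar>u\<bar> / \<bar>sd\<bar>"
      using h assms(2) by (simp add: abs_mult divide_right_mono field_simps)
    also have "\<dots> \<le> e * (\<bar>R\<bar> + 1) / \<bar>sd\<bar>"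
      using u \<open>e > 0\<close> by (intro divide_right_mono mult_left_mono) auto
    also have "\<dots> = \<delta>"
      using assms(2) by (simp add: e_def add_nonneg_pos)
    finally show "\<bar>(\<sigma> (t0 + h * u) - \<sigma> t0) / (h * sd) - u\<bar> \<le> \<delta>" .
  qed
qed

lemma uniform_limit_linearization:
  assumes "(\<sigma> has_real_derivative sd) (at t0)" "sd \<noteq> 0"
    and lim: "uniform_limit S g g0 (at_right 0)" and "bounded (g0 ` S)"
  shows "uniform_limit S (\<lambda>h x. (\<sigma> (t0 + h * g h x) - \<sigma> t0) / (h * sd)) g0 (at_right 0)"
proof (rule uniform_limitI)
  fix \<epsilon> :: real assume "\<epsilon> > 0"
  obtain M where M: "\<And>x. x \<in> S \<Longrightarrow> \<bar>g0 x\<bar> \<le> M"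
    using assms(4) by (auto simp: bounded_iff)
  have "\<forall>\<^sub>F h in at_right 0. \<forall>x\<in>S. dist (g h x) (g0 x) < min 1 (\<epsilon> / 2)"
    using \<open>\<epsilon> > 0\<close> by (intro uniform_limitD[OF lim]) simp
  moreover have "\<forall>\<^sub>F h in at_right 0. \<forall>u. \<bar>u\<bar> \<le> M + 1 \<longrightarrow>
      \<bar>(\<sigma> (t0 + h * u) - \<sigma> t0) / (h * sd) - u\<bar> \<le> \<epsilon> / 3"
    using \<open>\<epsilon> > 0\<close> by (intro linearization_error_eventually assms(1,2)) simp
  ultimately show "\<forall>\<^sub>F h in at_right 0. \<forall>x\<in>S. dist ((\<sigma> (t0 + h * g h x) - \<sigma> t0) / (h * sd)) (g0 x) < \<epsilon>"
  proof eventually_elim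
    case (elim h)
    show ?case
    proof
      fix x assume "x \<in> S"
      then have close: "\<bar>g h x - g0 x\<bar> < min 1 (\<epsilon> / 2)"
        using elim(1) by (simp add: dist_real_def)
      then have "\<bar>g h x\<bar> \<le> M + 1"
        using M[OF \<open>x \<in> S\<close>] by linarith
      then have "\<bar>(\<sigma> (t0 + h * g h x) - \<sigma> t0) / (h * sd) - g h x\<bar> \<le> \<epsilon> / 3"
        using elim(2) by blast
      with close show "dist ((\<sigma> (t0 + h * g h x) - \<sigma> t0) / (h * sd)) (g0 x) < \<epsilon>"
        unfolding dist_real_def by linarith
    qed
  qed
qed

lemma uniform_limit_at_right_0_cong:
  fixes f g :: "real \<Rightarrow> 'a \<Rightarrow> real"
  assumes "\<And>h x. h > 0 \<Longrightarrow> x \<in> S \<Longrightarrow> f h x = g h x"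
  shows "uniform_limit S f l (at_right 0) \<longleftrightarrow> uniform_limit S g l (at_right 0)"
proof (rule uniform_limit_cong)
  show "\<forall>\<^sub>F h in at_right 0. \<forall>x\<in>S. f h x = g h x"
    by (rule eventually_mono[OF eventually_at_right_less[of 0]]) (simp add: assms)
qed simp

section \<open>A narrow deep network emulating a shallow one\<close>

locale narrow_emulation =
  fixes \<sigma> :: "real \<Rightarrow> real" and d p :: nat and t0 sd :: real
    and A b :: "nat \<Rightarrow> real" and V :: "nat \<Rightarrow> nat \<Rightarrow> real"
  assumes width: "d + 3 \<le> p"
    and continuous: "continuous_on UNIV \<sigma>"
    and derivative: "(\<sigma> has_real_derivative sd) (at t0)" and slope: "sd \<noteq> 0"
begin

text \<open>The network emulates \<open>x \<mapsto> \<Sum>i<n. A i * \<sigma> (lin_form d (V i) x + b i)\<close>. The input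
  coordinates (channels \<open>1..d\<close>) and the running sum (channel \<open>d + 1\<close>) are stored in the form
  \<open>\<sigma> (t0 + h * u)\<close> and read back with \<open>decode h\<close>; channel \<open>d + 2\<close> of layer \<open>l\<close> holds hidden unit
  \<open>l - 1\<close>, which the next layer adds to the running sum. All other channels are unused.\<close>

definition weights :: "real \<Rightarrow> nat \<Rightarrow> nat \<Rightarrow> nat \<Rightarrow> real" where
  "weights h l k j =
    (if l = 1 then
       (if k \<in> {1..d} then (if j = k then h else 0)
        else if k = d + 2 then V 0 j else 0)
     else
       (if k \<in> {1..d} then (if j = k then 1 / sd else 0)
        else if k = d + 1 then (if j = d + 1 then 1 / sd else if j = d + 2 then h * A (l - 2) else 0)
        else if k = d + 2 then (if j \<in> {1..d} then V (l - 1) j / (h * sd) else 0)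
        else 0))"

definition biases :: "real \<Rightarrow> nat \<Rightarrow> nat \<Rightarrow> real" where
  "biases h l k =
    (if l = 1 then (if k \<in> {1..d} \<or> k = d + 1 then t0 else if k = d + 2 then b 0 else 0)
     else if k \<in> {1..d} \<or> k = d + 1 then t0 - \<sigma> t0 / sd
     else if k = d + 2 then b (l - 1) - \<sigma> t0 / (h * sd) * (\<Sum>j=1..d. V (l - 1) j)
     else 0)"

definition layer :: "real \<Rightarrow> nat \<Rightarrow> (nat \<Rightarrow> real) \<Rightarrow> nat \<Rightarrow> real" where
  "layer h l x = hdann_layer \<sigma> d p (weights h) (biases h) l x"

definition decode :: "real \<Rightarrow> real \<Rightarrow> real" where
  "decode h y = (y - \<sigma> t0) / (h * sd)"

lemma layer_1:
  "layer h (Suc 0) x k = \<sigma> ((\<Sum>j=1..d. weights h 1 k j * x j) + biases h 1 k)"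
  by (simp add: layer_def)

lemma layer_Suc:
  "1 \<le> l \<Longrightarrow>
    layer h (Suc l) x k = \<sigma> ((\<Sum>j=1..p. weights h (Suc l) k j * layer h l x j) + biases h (Suc l) k)"
  by (simp add: layer_def)

lemma layer_1_coord: "k \<in> {1..d} \<Longrightarrow> layer h (Suc 0) x k = \<sigma> (t0 + h * x k)"
  unfolding layer_1
  by (simp add: weights_def biases_def if_distrib[of "\<lambda>c. c * x _"] add.commute cong: if_cong)

lemma layer_1_acc: "layer h (Suc 0) x (d + 1) = \<sigma> t0"
  unfolding layer_1 by (simp add: weights_def biases_def)

lemma layer_1_hidden: "layer h (Suc 0) x (d + 2) = \<sigma> (lin_form d (V 0) x + b 0)"
  unfolding layer_1 by (simp add: weights_def biases_def lin_form_def)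

lemma layer_Suc_coord:
  assumes "h \<noteq> 0" "1 \<le> l" "k \<in> {1..d}"
  shows "layer h (Suc l) x k = \<sigma> (t0 + h * decode h (layer h l x k))"
proof -
  have "(\<Sum>j=1..p. weights h (Suc l) k j * layer h l x j)
      = (\<Sum>j=1..p. if j = k then layer h l x k / sd else 0)"
    using assms by (intro sum.cong) (auto simp: weights_def)
  also have "\<dots> = layer h l x k / sd"
    using assms(3) width by simp
  also have "\<dots> = t0 + h * decode h (layer h l x k) - biases h (Suc l) k"
    using assms slope by (simp add: biases_def decode_def field_simps)
  finally show ?thesis
    using assms(2) by (simp add: layer_Suc)
qed

lemma layer_Suc_acc:
  assumes "h \<noteq> 0" "1 \<le> l"
  shows "layer h (Suc l) x (d + 1)
    = \<sigma> (t0 + h * (decode h (layer h l x (d + 1)) + A (l - 1) * layer h l x (d + 2)))"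
proof -
  have "(\<Sum>j=1..p. weights h (Suc l) (d + 1) j * layer h l x j)
      = (\<Sum>j=1..p. (if j = d + 1 then layer h l x (d + 1) / sd else 0)
          + (if j = d + 2 then h * A (l - 1) * layer h l x (d + 2) else 0))"
    using assms by (intro sum.cong) (auto simp: weights_def)
  also have "\<dots> = layer h l x (d + 1) / sd + h * A (l - 1) * layer h l x (d + 2)"
    using width by (simp add: sum.distrib)
  also have "\<dots> = t0 + h * (decode h (layer h l x (d + 1)) + A (l - 1) * layer h l x (d + 2))
      - biases h (Suc l) (d + 1)"
    using assms slope by (simp add: biases_def decode_def field_simps)
  finally show ?thesis
    using assms(2) by (simp add: layer_Suc)
qed

lemma layer_Suc_hidden:
  assumes "h \<noteq> 0" "1 \<le> l"
  shows "layer h (Suc l) x (d + 2) = \<sigma> (lin_form d (V l) (\<lambda>j. decode h (layer h l x j)) + b l)"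
proof -
  have "(\<Sum>j=1..p. weights h (Suc l) (d + 2) j * layer h l x j)
      = (\<Sum>j=1..p. if j \<in> {1..d} then V l j / (h * sd) * layer h l x j else 0)"
    using assms by (intro sum.cong) (auto simp: weights_def)
  also have "\<dots> = (\<Sum>j=1..d. V l j / (h * sd) * layer h l x j)"
    unfolding sum.inter_restrict[OF finite_atLeastAtMost, symmetric] using width
    by (intro sum.cong) auto
  also have "\<dots> = lin_form d (V l) (\<lambda>j. decode h (layer h l x j)) + \<sigma> t0 / (h * sd) * (\<Sum>j=1..d. V l j)"
    unfolding lin_form_def decode_def sum_distrib_left sum.distrib[symmetric]
    using assms(1) slope by (intro sum.cong) (simp_all add: field_simps)
  finally show ?thesis
    using assms(2) by (simp add: layer_Suc biases_def)
qed

lemma uniform_limit_decode: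
  assumes "uniform_limit S g g0 (at_right 0)" "bounded (g0 ` S)"
  shows "uniform_limit S (\<lambda>h x. decode h (\<sigma> (t0 + h * g h x))) g0 (at_right 0)"
  unfolding decode_def using derivative slope assms by (rule uniform_limit_linearization)

lemma uniform_limit_coord:
  assumes "k \<in> {1..d}" "1 \<le> l"
  shows "uniform_limit (unit_cube d) (\<lambda>h x. decode h (layer h l x k)) (\<lambda>x. x k) (at_right 0)"
proof -
  have bounded: "bounded ((\<lambda>x. x k) ` unit_cube d)"
    by (intro bounded_image_unit_cube continuous_on_subset[OF continuous_on_product_coordinates]) auto
  show ?thesis
    using assms(2)
  proof (induction l rule: nat_induct_at_least)
    case base
    have "uniform_limit (unit_cube d) (\<lambda>h x. decode h (\<sigma> (t0 + h * x k))) (\<lambda>x. x k) (at_right 0)"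
      using uniform_limit_const bounded by (rule uniform_limit_decode)
    then show ?case
      using assms(1) by (simp add: layer_1_coord)
  next
    case (Suc l)
    have "uniform_limit (unit_cube d) (\<lambda>h x. decode h (\<sigma> (t0 + h * decode h (layer h l x k))))
        (\<lambda>x. x k) (at_right 0)"
      using Suc.IH bounded by (rule uniform_limit_decode)
    then show ?case
      using Suc.hyps assms(1) by (subst uniform_limit_at_right_0_cong) (auto simp: layer_Suc_coord)
  qed
qed

lemma continuous_on_hidden_unit: "continuous_on S (\<lambda>x. \<sigma> (lin_form d v x + c))"
  by (intro continuous_on_compose2[OF continuous] continuous_intros continuous_on_lin_form) auto

lemma uniform_limit_hidden:
  assumes "1 \<le> l"
  shows "uniform_limit (unit_cube d) (\<lambda>h x. layer h l x (d + 2))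
    (\<lambda>x. \<sigma> (lin_form d (V (l - 1)) x + b (l - 1))) (at_right 0)"
proof (cases "l = 1")
  case True
  have "uniform_limit (unit_cube d) (\<lambda>h x. layer h (Suc 0) x (d + 2))
      (\<lambda>x. \<sigma> (lin_form d (V 0) x + b 0)) (at_right 0)"
    unfolding layer_1_hidden by (rule uniform_limit_const)
  with True show ?thesis
    by simp
next
  case False
  then obtain m where "l = Suc m" "1 \<le> m"
    using assms by (metis Suc_pred' le_neq_implies_less less_one nat_le_linear not_less_eq_eq)
  have "uniform_limit (unit_cube d) (\<lambda>h x. \<Sum>j=1..d. V m j * decode h (layer h m x j))
      (\<lambda>x. \<Sum>j=1..d. V m j * x j) (at_right 0)"
    using \<open>1 \<le> m\<close> by (intro uniform_limit_sum uniform_limit_intros uniform_limit_coord) auto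
  then have "uniform_limit (unit_cube d) (\<lambda>h x. lin_form d (V m) (\<lambda>j. decode h (layer h m x j)) + b m)
      (\<lambda>x. lin_form d (V m) x + b m) (at_right 0)"
    unfolding lin_form_def by (intro uniform_limit_intros)
  moreover have "bounded ((\<lambda>x. lin_form d (V m) x + b m) ` unit_cube d)"
    by (intro bounded_image_unit_cube continuous_intros continuous_on_lin_form)
  ultimately have "uniform_limit (unit_cube d)
      (\<lambda>h x. \<sigma> (lin_form d (V m) (\<lambda>j. decode h (layer h m x j)) + b m))
      (\<lambda>x. \<sigma> (lin_form d (V m) x + b m)) (at_right 0)"
    by (rule uniform_limit_continuous_compose[OF continuous])
  then show ?thesis
    using \<open>l = Suc m\<close> \<open>1 \<le> m\<close>
    by (subst uniform_limit_at_right_0_cong) (auto simp: layer_Suc_hidden[simplified])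
qed

lemma uniform_limit_accumulator:
  "uniform_limit (unit_cube d) (\<lambda>h x. decode h (layer h (Suc n) x (d + 1)))
    (\<lambda>x. \<Sum>i<n. A i * \<sigma> (lin_form d (V i) x + b i)) (at_right 0)"
proof (induction n)
  case 0
  show ?case
    unfolding layer_1_acc decode_def by (simp add: uniform_limit_const)
next
  case (Suc n)
  let ?sum = "\<lambda>x. \<Sum>i<Suc n. A i * \<sigma> (lin_form d (V i) x + b i)"
  have "uniform_limit (unit_cube d)
      (\<lambda>h x. decode h (layer h (Suc n) x (d + 1)) + A n * layer h (Suc n) x (d + 2)) ?sum (at_right 0)"
    unfolding sum.lessThan_Suc using Suc.IH uniform_limit_hidden[of "Suc n"]
    by (intro uniform_limit_add uniform_limit_intros) simp_all
  moreover have "bounded (?sum ` unit_cube d)"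
    by (intro bounded_image_unit_cube continuous_intros continuous_on_hidden_unit)
  ultimately have "uniform_limit (unit_cube d) (\<lambda>h x. decode h (\<sigma> (t0 + h *
      (decode h (layer h (Suc n) x (d + 1)) + A n * layer h (Suc n) x (d + 2))))) ?sum (at_right 0)"
    by (rule uniform_limit_decode)
  then show ?case
    by (subst uniform_limit_at_right_0_cong) (auto simp: layer_Suc_acc[simplified])
qed

lemma emulates_shallow_net:
  assumes "\<epsilon> > 0"
  obtains h where "h > 0" "\<And>x. x \<in> unit_cube d \<Longrightarrow>
    \<bar>decode h (layer h (Suc n) x (d + 1)) - (\<Sum>i<n. A i * \<sigma> (lin_form d (V i) x + b i))\<bar> < \<epsilon>"
proof -
  have "\<forall>\<^sub>F h in at_right 0. h > 0 \<and> (\<forall>x\<in>unit_cube d.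
      dist (decode h (layer h (Suc n) x (d + 1))) (\<Sum>i<n. A i * \<sigma> (lin_form d (V i) x + b i)) < \<epsilon>)"
    using eventually_at_right_less uniform_limitD[OF uniform_limit_accumulator assms]
    by (rule eventually_conj)
  then obtain h where "h > 0" "\<forall>x\<in>unit_cube d.
      dist (decode h (layer h (Suc n) x (d + 1))) (\<Sum>i<n. A i * \<sigma> (lin_form d (V i) x + b i)) < \<epsilon>"
    using eventually_happens'[OF trivial_limit_at_right_real] by blast
  with that show thesis
    by (simp add: dist_real_def)
qed

end

lemma nonzero_derivative_imp_nonconstant:
  assumes "(\<sigma> has_real_derivative sd) (at t0)" "sd \<noteq> 0"
  obtains a b where "\<sigma> a \<noteq> \<sigma> b"
proof (rule ccontr)
  assume "\<not> thesis"
  with that have "\<sigma> = (\<lambda>_. \<sigma> t0)"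
    by blast
  then have "(\<sigma> has_real_derivative 0) (at t0)"
    by (metis DERIV_const)
  with assms show False
    using DERIV_unique by blast
qed

lemma narrow_network_approximation:
  assumes "d + 3 \<le> p" "continuous_on UNIV \<sigma>" "bounded (range \<sigma>)"
    and "(\<sigma> has_real_derivative sd) (at t0)" "sd \<noteq> 0"
    and "continuous_on (unit_cube d) f" "\<epsilon> > 0"
  obtains L W bb c h where "\<forall>x\<in>unit_cube d.
    \<bar>f x - (c + (hdann_layer \<sigma> d p W bb (Suc L) x (d + 1) - \<sigma> t0) / (h * sd))\<bar> \<le> \<epsilon>"
proof -
  obtain a a' where "\<sigma> a \<noteq> \<sigma> a'"
    using assms(4,5) by (rule nonzero_derivative_imp_nonconstant)
  then obtain c xs where shallow: "\<forall>x\<in>unit_cube d. \<bar>f x - (c + shallow_net \<sigma> d xs x)\<bar> \<le> \<epsilon> / 2"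
    using shallow_approximable_continuous[OF assms(2,3) _ assms(6)] assms(7)
    unfolding shallow_approximable_def by (meson half_gt_zero)
  interpret narrow_emulation \<sigma> d p t0 sd "\<lambda>i. fst (xs ! i)" "\<lambda>i. snd (snd (xs ! i))" "\<lambda>i. fst (snd (xs ! i))"
    using assms by unfold_locales auto
  obtain h where emulation: "\<And>x. x \<in> unit_cube d \<Longrightarrow>
      \<bar>decode h (layer h (Suc (length xs)) x (d + 1)) - shallow_net \<sigma> d xs x\<bar> < \<epsilon> / 2"
    using emulates_shallow_net[of "\<epsilon> / 2" "length xs"] assms(7) by (auto simp: shallow_net_eq_sum)
  have "\<bar>f x - (c + decode h (layer h (Suc (length xs)) x (d + 1)))\<bar> \<le> \<epsilon>" if "x \<in> unit_cube d" for x
    using bspec[OF shallow that] emulation[OF that] by linarith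
  with that[of c "weights h" "biases h" "length xs" h] show thesis
    by (simp add: layer_def decode_def)
qed

section \<open>The output layer\<close>

lemma hdann2_readout:
  assumes "j \<in> {1..p}" "basis_functions (B j)" "continuous_on {0..1} \<phi>" "\<delta> > 0"
    and "\<forall>t. 0 \<le> \<sigma> t \<and> \<sigma> t \<le> 1"
  obtains q c b \<delta>' where "\<forall>k\<in>{1..p}. q k \<ge> 1" "\<delta>' < \<delta>"
    "\<forall>x. \<bar>\<phi> (hdann_layer \<sigma> d p W bb (Suc L) x j) + c0 - hdann2 \<sigma> d p B (Suc L) W bb q c b x\<bar> \<le> \<delta>'"
proof -
  obtain qj cj b \<delta>' where "qj \<ge> 1" "\<delta>' < \<delta>"
    and approx: "\<forall>y\<in>{0..1}. \<bar>\<phi> y - ((\<Sum>r=1..qj. cj r * B j r y) + b)\<bar> \<le> \<delta>'"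
    using assms(2-4) unfolding basis_functions_def by blast
  define q where "q k = (if k = j then qj else 1)" for k
  define c where "c k r = (if k = j then cj r else 0)" for k r
  have "hdann2 \<sigma> d p B (Suc L) W bb q c (b + c0) x
      = (\<Sum>r=1..qj. cj r * B j r (hdann_layer \<sigma> d p W bb (Suc L) x j)) + b + c0" for x
  proof -
    have "(\<Sum>k=1..p. \<Sum>r=1..q k. c k r * B k r (hdann_layer \<sigma> d p W bb (Suc L) x k))
        = (\<Sum>k=1..p. if k = j then (\<Sum>r=1..qj. cj r * B j r (hdann_layer \<sigma> d p W bb (Suc L) x j)) else 0)"
      by (intro sum.cong) (auto simp: q_def c_def)
    then show ?thesis
      using assms(1) by (simp add: hdann2_def)
  qed
  moreover have "hdann_layer \<sigma> d p W bb (Suc L) x j \<in> {0..1}" for x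
    using assms(5) by simp
  ultimately have "\<forall>x. \<bar>\<phi> (hdann_layer \<sigma> d p W bb (Suc L) x j) + c0 - hdann2 \<sigma> d p B (Suc L) W bb q c (b + c0) x\<bar>
      \<le> \<delta>'"
    using approx by simp
  moreover have "\<forall>k\<in>{1..p}. q k \<ge> 1"
    using \<open>qj \<ge> 1\<close> by (simp add: q_def)
  ultimately show thesis
    using that \<open>\<delta>' < \<delta>\<close> by blast
qed

theorem theorem3:
  fixes d p :: nat
    and B :: "nat \<Rightarrow> nat \<Rightarrow> real \<Rightarrow> real"
    and \<sigma> :: "real \<Rightarrow> real"
    and f :: "(nat \<Rightarrow> real) \<Rightarrow> real"
    and \<epsilon> :: real
  assumes d: "d \<ge> 1"
    and p: "p \<ge> d + 3"
    and basis: "\<forall>k\<in>{1..p}. basis_functions (B k)"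
    and sigma_cont: "continuous_on UNIV \<sigma>"
    and sigma_range: "\<forall>t. 0 \<le> \<sigma> t \<and> \<sigma> t \<le> 1"
    and sigma_diff: "\<exists>t0 \<sigma>' e. e > 0 \<and> (\<forall>t\<in>ball t0 e. (\<sigma> has_real_derivative \<sigma>' t) (at t))
                        \<and> isCont \<sigma>' t0 \<and> \<sigma>' t0 \<noteq> 0"
    and f_cont: "continuous_on (unit_cube d) f"
    and eps: "\<epsilon> > 0"
  shows "\<exists>L\<ge>1. \<exists>(q::nat \<Rightarrow> nat) W bb c b. (\<forall>k\<in>{1..p}. q k \<ge> 1) \<and>
           (\<exists>\<delta><\<epsilon>. \<forall>x\<in>unit_cube d. \<bar>f x - hdann2 \<sigma> d p B L W bb q c b x\<bar> \<le> \<delta>)"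
proof -
  obtain t0 sd where deriv: "(\<sigma> has_real_derivative sd) (at t0)" and "sd \<noteq> 0"
    using sigma_diff by (metis centre_in_ball)
  have "bounded (range \<sigma>)" "\<epsilon> / 2 > 0"
    using sigma_range eps by (auto simp: bounded_iff intro!: exI[of _ 1])
  then obtain L W bb c h where approx: "\<forall>x\<in>unit_cube d.
      \<bar>f x - (c + (hdann_layer \<sigma> d p W bb (Suc L) x (d + 1) - \<sigma> t0) / (h * sd))\<bar> \<le> \<epsilon> / 2"
    by (rule narrow_network_approximation[OF p sigma_cont _ deriv \<open>sd \<noteq> 0\<close> f_cont])
  have "d + 1 \<in> {1..p}" "basis_functions (B (d + 1))"
    using p basis by simp_all
  moreover have "continuous_on {0..1} (\<lambda>y. (y - \<sigma> t0) / (h * sd))"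
    unfolding divide_inverse by (intro continuous_intros)
  ultimately obtain q cs b \<delta> where "\<forall>k\<in>{1..p}. q k \<ge> 1" "\<delta> < \<epsilon> / 2" and readout: "\<forall>x.
      \<bar>(hdann_layer \<sigma> d p W bb (Suc L) x (d + 1) - \<sigma> t0) / (h * sd) + c
        - hdann2 \<sigma> d p B (Suc L) W bb q cs b x\<bar> \<le> \<delta>"
    using \<open>\<epsilon> / 2 > 0\<close> by (rule hdann2_readout[OF _ _ _ _ sigma_range])
  have "\<bar>f x - hdann2 \<sigma> d p B (Suc L) W bb q cs b x\<bar> \<le> \<epsilon> / 2 + \<delta>" if "x \<in> unit_cube d" for x
    using bspec[OF approx that] spec[OF readout, of x] by linarith
  moreover have "\<epsilon> / 2 + \<delta> < \<epsilon>" "1 \<le> Suc L"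
    using \<open>\<delta> < \<epsilon> / 2\<close> by simp_all
  ultimately show ?thesis
    using \<open>\<forall>k\<in>{1..p}. q k \<ge> 1\<close> by (metis (lifting))
qed

end
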